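(* Let $I^d\subsetneq\mathbb{R}^d$ be a proper interval with the restricted Borel $\sigma$-algebra, let $\mu$ be a probability measure on it, and let $f:I^d\to I^d$ be an ergodic $\mu$-preserving transformation. Then the permutation entropy rate of $f$ equals its metric (Kolmogorov–Sinai) entropy rate: $h^*_\mu(f)=h_\mu(f)$.
   Context: Product partitions: $\iota=\prod_{k=1}^d\{I_{1,k},\ldots,I_{N_k,k}\}$ is a partition of $I^d$ into $N_1\cdots N_d$ subintervals, the $k$-th factor splitting the $k$-th coordinate range into $N_k$ consecutive intervals of lengths $\Delta_{j,k}$; its norm is $\|\iota\|=\max_{j,k}\Delta_{j,k}$. The cells are enumerated lexicographically as $\iota=\{I^d_i:1\le i\le N_1\cdots N_d\}$ with $I^d_i<I^d_{i+1}$. The simple observations of $f$ with respect to $\iota$ are the finite-alphabet stationary process $\mathbf{S}^\iota=(S^\iota_n)_{n\ge0}$ on $(I^d,\mu)$ defined by $S^\iota_n(x)=i$ iff $f^n(x)\in I^d_i$, with alphabet $\{1,\ldots,N_1\cdots N_d\}$ ordered as integers. For a finite-alphabet process $\mathbf{S}$, the rank variables are $R_n=\sum_{i\le n}\delta(S_i\le S_n)$ (indices running over the observed block starting at its first element; $\delta(P)=1$ if $P$ holds, else $0$) and the permutation entropy rate is $h^*_m(\mathbf{S})=\lim_{L\to\infty}\frac{1}{L-1}H(R_1^L)$ (Shannon entropy, base 2, of the rank word of a block of length $L$). The permutation entropy rate of $f$ is $h^*_\mu(f):=\lim_{\|\iota\|\to0}h^*_m(\mathbf{S}^\iota)$. The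 metric entropy rate is $h_\mu(f)=\sup_\alpha\lim_{L\to\infty}\frac1L H_\mu\big(\bigvee_{i=0}^{L-1}f^{-i}\alpha\big)$, the supremum over finite measurable partitions $\alpha$, with $H_\mu(\beta)=-\sum_{B\in\beta}\mu(B)\log_2\mu(B)$. *)

theory Defs
  imports "HOL-Probability.Probability"
begin

definition entr :: "real \<Rightarrow> real" where
  "entr p = (if p > 0 then - p * log 2 p else 0)"

definition measure_preserving_map :: "'a measure \<Rightarrow> ('a \<Rightarrow> 'a) \<Rightarrow> bool" where
  "measure_preserving_map M f \<longleftrightarrow> f \<in> measurable M M \<and>
     (\<forall>A\<in>sets M. measure M (f -` A \<inter> space M) = measure M A)"

definition ergodic :: "'a measure \<Rightarrow> ('a \<Rightarrow> 'a) \<Rightarrow> bool" where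
  "ergodic M f \<longleftrightarrow> measure_preserving_map M f \<and>
     (\<forall>A\<in>sets M. f -` A \<inter> space M = A \<longrightarrow> measure M A = 0 \<or> measure M A = 1)"

definition finite_meas_partition :: "'a measure \<Rightarrow> 'a set set \<Rightarrow> bool" where
  "finite_meas_partition M \<alpha> \<longleftrightarrow> finite \<alpha> \<and> \<alpha> \<subseteq> sets M \<and> \<Union>\<alpha> = space M \<and>
     (\<forall>A\<in>\<alpha>. \<forall>B\<in>\<alpha>. A \<noteq> B \<longrightarrow> A \<inter> B = {})"

definition part_entropy :: "'a measure \<Rightarrow> 'a set set \<Rightarrow> real" where
  "part_entropy M \<beta> = (\<Sum>B\<in>\<beta>. entr (measure M B))"

definition dyn_join :: "'a measure \<Rightarrow> ('a \<Rightarrow> 'a) \<Rightarrow> 'a set set \<Rightarrow> nat \<Rightarrow> 'a set set" where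
  "dyn_join M f \<alpha> L =
     {space M \<inter> (\<Inter>i\<in>{..<L}. (f ^^ i) -` (A i)) | A. A \<in> {..<L} \<rightarrow> \<alpha>}"

definition ks_entropy :: "'a measure \<Rightarrow> ('a \<Rightarrow> 'a) \<Rightarrow> ereal" where
  "ks_entropy M f = (SUP \<alpha>\<in>{\<alpha>. finite_meas_partition M \<alpha>}.
      ereal (lim (\<lambda>L. part_entropy M (dyn_join M f \<alpha> L) / real L)))"

definition interval_partition :: "real set \<Rightarrow> real set list \<Rightarrow> bool" where
  "interval_partition J P \<longleftrightarrow> P \<noteq> [] \<and>
     (\<forall>j<length P. is_interval (P ! j) \<and> P ! j \<noteq> {}) \<and>
     \<Union>(set P) = J \<and>
     (\<forall>j<length P. \<forall>j'<length P. j \<noteq> j' \<longrightarrow> P ! j \<inter> P ! j' = {}) \<and>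
     (\<forall>j. Suc j < length P \<longrightarrow> (\<forall>x\<in>P ! j. \<forall>y\<in>P ! Suc j. x < y))"

definition prod_partition :: "('d \<Rightarrow> real set) \<Rightarrow> ('d \<Rightarrow> real set list) \<Rightarrow> bool" where
  "prod_partition J P \<longleftrightarrow> (\<forall>k. interval_partition (J k) (P k))"

definition box_of :: "('d::finite \<Rightarrow> real set) \<Rightarrow> ((real, 'd) vec) set" where
  "box_of J = {x. \<forall>k. x $ k \<in> J k}"

definition part_norm :: "('d::finite \<Rightarrow> real set list) \<Rightarrow> real" where
  "part_norm P = Max {diameter (P k ! j) | k j. j < length (P k)}"

definition cell_idx :: "('d \<Rightarrow> real set list) \<Rightarrow> 'd \<Rightarrow> real \<Rightarrow> nat" where
  "cell_idx P k t = (THE j. j < length (P k) \<and> t \<in> P k ! j)"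

text \<open>Lexicographic enumeration of the cells: the cell with coordinate indices
  (j_1,...,j_d) (0-based, first coordinate most significant) gets number
  1 + sum_k j_k * prod_{k'>k} N_{k'}, a number in {1..N_1...N_d}.\<close>
definition cell_number :: "('d::{finite,linorder} \<Rightarrow> real set list) \<Rightarrow> (real, 'd) vec \<Rightarrow> nat" where
  "cell_number P x = 1 + (\<Sum>k\<in>UNIV. cell_idx P k (x $ k) * (\<Prod>k'\<in>{k'. k < k'}. length (P k')))"

definition simple_obs :: "('d::{finite,linorder} \<Rightarrow> real set list) \<Rightarrow> ((real, 'd) vec \<Rightarrow> (real, 'd) vec)
     \<Rightarrow> nat \<Rightarrow> (real, 'd) vec \<Rightarrow> nat" where
  "simple_obs P f n x = cell_number P ((f ^^ n) x)"

definition rank_word :: "(nat \<Rightarrow> 'a \<Rightarrow> nat) \<Rightarrow> nat \<Rightarrow> 'a \<Rightarrow> nat list" where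
  "rank_word S L x = map (\<lambda>n. card {i. i \<le> n \<and> S i x \<le> S n x}) [0..<L]"

definition rank_entropy :: "'a measure \<Rightarrow> (nat \<Rightarrow> 'a \<Rightarrow> nat) \<Rightarrow> nat \<Rightarrow> real" where
  "rank_entropy M S L =
     (\<Sum>w\<in>rank_word S L ` space M. entr (measure M {x\<in>space M. rank_word S L x = w}))"

definition perm_entropy_seq :: "'a measure \<Rightarrow> (nat \<Rightarrow> 'a \<Rightarrow> nat) \<Rightarrow> nat \<Rightarrow> real" where
  "perm_entropy_seq M S L = rank_entropy M S L / real (L - 1)"

definition perm_entropy_rate_proc :: "'a measure \<Rightarrow> (nat \<Rightarrow> 'a \<Rightarrow> nat) \<Rightarrow> real" where
  "perm_entropy_rate_proc M S = lim (perm_entropy_seq M S)"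

definition fine_partitions :: "('d::finite \<Rightarrow> real set) \<Rightarrow> ('d \<Rightarrow> real set list) filter" where
  "fine_partitions J = (INF \<delta>\<in>{0<..}. principal {P. prod_partition J P \<and> part_norm P < \<delta>})"

end

theory Submission
  imports Defs "HOL-Real_Asymp.Real_Asymp"
begin

(* The rank word of L successive observations X (f^i x), i < L, of a finite-valued observable,
   together with the counts #{i < L. X (f^i x) <= v}, determines the observations themselves.
   There are at most (L + 1)^|range X| count vectors, so block entropy and rank entropy differ
   by O(log L), and the permutation entropy rate of the simple observations is the entropy rate
   of the cell partition.  As the mesh tends to 0, the cell number predicts the cell of any
   finite measurable partition outside a set of small measure (the cells of the partition
   contain compact cores, by inner regularity, and distinct cores lie at positive distance), so
   by a Fano-type estimate the entropy rates of the cell partitions eventually come arbitrarily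
   close to that of every finite partition; they never exceed the Kolmogorov-Sinai entropy. *)

section \<open>Fekete's subadditive lemma\<close>

lemma subadditive_le_mult_add:
  fixes a :: "nat \<Rightarrow> real"
  assumes sub: "\<And>m n. a (m + n) \<le> a m + a n"
  shows "a (q * k + r) \<le> real q * a k + a r"
proof (induction q)
  case 0
  then show ?case by simp
next
  case (Suc q)
  have "a (Suc q * k + r) = a (k + (q * k + r))" by (simp add: algebra_simps)
  also have "\<dots> \<le> a k + a (q * k + r)" by (rule sub)
  also have "\<dots> \<le> a k + (real q * a k + a r)" using Suc by simp
  finally show ?case by (simp add: algebra_simps)
qed

lemma subadditive_imp_convergent_div:
  fixes a :: "nat \<Rightarrow> real"
  assumes sub: "\<And>m n. a (m + n) \<le> a m + a n" and nonneg: "\<And>n. 0 \<le> a n"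
  shows "convergent (\<lambda>n. a n / real n)"
proof -
  define S where "S = (\<lambda>n. a n / real n) ` {1..}"
  define l where "l = Inf S"
  have bdd: "bdd_below S" unfolding S_def using nonneg by (intro bdd_belowI[of _ 0]) auto
  have l_le: "l \<le> a n / real n" if "n \<ge> 1" for n
    unfolding l_def using that bdd by (intro cInf_lower) (auto simp: S_def)
  have "(\<lambda>n. a n / real n) \<longlonglongrightarrow> l"
  proof (rule LIMSEQ_I)
    fix e :: real assume e: "0 < e"
    have "S \<noteq> {}" by (auto simp: S_def)
    moreover have "Inf S < l + e/2" using e by (simp add: l_def)
    ultimately obtain s where "s \<in> S" "s < l + e/2"
      by (auto simp: cInf_less_iff[OF _ bdd])
    then obtain k where k: "k \<ge> 1" "a k / real k < l + e/2" unfolding S_def by auto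
    define C where "C = Max (a ` {..<k})"
    have C: "a r \<le> C" if "r < k" for r unfolding C_def using that by (intro Max_ge) auto
    obtain N :: nat where N: "N > 2 * C / e" using reals_Archimedean2 by blast
    show "\<exists>no. \<forall>n\<ge>no. norm (a n / real n - l) < e"
    proof (intro exI[of _ "N + 1"] allI impI)
      fix n assume n: "n \<ge> N + 1"
      then have n_pos: "real n > 0" by simp
      have "a n = a (n div k * k + n mod k)" by simp
      also have "\<dots> \<le> real (n div k) * a k + a (n mod k)"
        by (rule subadditive_le_mult_add[where a = a, OF sub])
      also have "\<dots> \<le> real n * (a k / real k) + C"
      proof -
        have "n div k * k \<le> n" by simp
        then have "real (n div k) * real k \<le> real n"
          by (metis of_nat_le_iff of_nat_mult)
        then have "real (n div k) * real k * a k \<le> real n * a k"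
          using nonneg[of k] by (intro mult_right_mono) auto
        then have "real (n div k) * a k \<le> real n * (a k / real k)"
          using k by (simp add: field_simps)
        then show ?thesis using C[of "n mod k"] k by simp
      qed
      finally have "a n / real n \<le> a k / real k + C / real n"
        using n_pos by (simp add: field_simps)
      moreover have "C / real n < e / 2"
      proof -
        have "real n > 2 * C / e" using N n by linarith
        then show ?thesis using n_pos e by (simp add: field_simps)
      qed
      ultimately have "a n / real n < l + e" using k(2) by linarith
      with l_le[of n] n show "norm (a n / real n - l) < e" by simp
    qed
  qed
  then show ?thesis by (rule convergentI)
qed

section \<open>Entropy of finite-valued random variables\<close>

lemma entr_0 [simp]: "entr 0 = 0"
  by (simp add: entr_def)

lemma entr_nonneg: "0 \<le> p \<Longrightarrow> p \<le> 1 \<Longrightarrow> 0 \<le> entr p"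
  by (auto simp: entr_def mult_nonneg_nonpos)

lemma entr_eq_log: "0 \<le> p \<Longrightarrow> entr p = - p * log 2 p"
  by (cases "p = 0") (auto simp: entr_def)

lemma entr_add_le:
  assumes "0 \<le> a" "0 \<le> b"
  shows "entr (a + b) \<le> entr a + entr b"
proof (cases "a = 0 \<or> b = 0")
  case True
  then show ?thesis using assms by auto
next
  case False
  then have a: "a > 0" and b: "b > 0" using assms by auto
  then have "a * log 2 a + b * log 2 b \<le> a * log 2 (a + b) + b * log 2 (a + b)"
    by (intro add_mono mult_left_mono) auto
  then show ?thesis using a b by (simp add: entr_def algebra_simps)
qed

lemma entr_sum_le:
  assumes "finite A" "\<And>x. x \<in> A \<Longrightarrow> 0 \<le> p x"
  shows "entr (\<Sum>x\<in>A. p x) \<le> (\<Sum>x\<in>A. entr (p x))"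
  using assms
proof (induction A rule: finite_induct)
  case (insert a A)
  have "entr (\<Sum>x\<in>insert a A. p x) = entr (p a + (\<Sum>x\<in>A. p x))" using insert by simp
  also have "\<dots> \<le> entr (p a) + entr (\<Sum>x\<in>A. p x)"
    by (rule entr_add_le) (auto intro!: sum_nonneg insert.prems)
  also have "\<dots> \<le> entr (p a) + (\<Sum>x\<in>A. entr (p x))" using insert by auto
  finally show ?case using insert by simp
qed simp

lemma entr_le_cross_entropy_term:
  assumes "0 \<le> p" "0 \<le> q" "p > 0 \<Longrightarrow> q > 0"
  shows "entr p \<le> (if p > 0 then - p * log 2 q else 0) + (q - p) / ln 2"
proof (cases "p > 0")
  case False
  then show ?thesis using assms by simp
next
  case True
  then have q: "q > 0" using assms by auto
  have "ln (q / p) \<le> q / p - 1" using q True by (intro ln_le_minus_one) auto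
  then have "p * ln (q / p) \<le> p * (q / p - 1)" using True by (intro mult_left_mono) auto
  then have "- p * ln p \<le> - p * ln q + (q - p)" using True q by (simp add: ln_div algebra_simps)
  then have "(- p * ln p) / ln 2 \<le> (- p * ln q + (q - p)) / ln 2"
    by (intro divide_right_mono) auto
  then show ?thesis using True by (simp add: entr_def log_def add_divide_distrib diff_divide_distrib)
qed

text \<open>Gibbs' inequality; the last summand vanishes when both p and q are probability vectors.\<close>
lemma sum_entr_le_cross_entropy:
  assumes "finite S" "\<And>v. v \<in> S \<Longrightarrow> 0 \<le> p v" "\<And>v. v \<in> S \<Longrightarrow> 0 \<le> q v"
    "\<And>v. v \<in> S \<Longrightarrow> p v > 0 \<Longrightarrow> q v > 0"
  shows "(\<Sum>v\<in>S. entr (p v)) \<le> (\<Sum>v\<in>S. if p v > 0 then - p v * log 2 (q v) else 0)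
      + ((\<Sum>v\<in>S. q v) - (\<Sum>v\<in>S. p v)) / ln 2"
proof -
  have "(\<Sum>v\<in>S. entr (p v))
      \<le> (\<Sum>v\<in>S. (if p v > 0 then - p v * log 2 (q v) else 0) + (q v - p v) / ln 2)"
    by (intro sum_mono entr_le_cross_entropy_term) (auto simp: assms)
  then show ?thesis
    by (simp add: sum.distrib sum_divide_distrib[symmetric] sum_subtractf)
qed

lemma sum_entr_le_log_card:
  assumes "finite S" "\<And>v. v \<in> S \<Longrightarrow> 0 \<le> q v" "(\<Sum>v\<in>S. q v) = p"
  shows "(\<Sum>v\<in>S. entr (q v)) \<le> entr p + p * log 2 (card S)"
proof (cases "p > 0")
  case False
  then have "p = 0" using assms sum_nonneg[of S q] by force
  then have "\<forall>v\<in>S. q v = 0" using assms sum_nonneg_eq_0_iff[of S q] by auto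
  then show ?thesis using \<open>p = 0\<close> by simp
next
  case True
  then have c: "card S > 0" using assms by (auto simp: card_gt_0_iff)
  have "(\<Sum>v\<in>S. entr (q v)) \<le> (\<Sum>v\<in>S. if q v > 0 then - q v * log 2 (p / card S) else 0)
      + ((\<Sum>v\<in>S. p / card S) - (\<Sum>v\<in>S. q v)) / ln 2"
    by (rule sum_entr_le_cross_entropy) (use assms True c in auto)
  also have "(\<Sum>v\<in>S. p / card S) = p" using c by simp
  also have "(\<Sum>v\<in>S. if q v > 0 then - q v * log 2 (p / card S) else 0)
      = (\<Sum>v\<in>S. - q v * log 2 (p / card S))"
    by (intro sum.cong) (use assms in force)+
  also have "\<dots> = - p * log 2 (p / card S)"
    using assms by (simp add: sum_negf sum_distrib_right[symmetric])
  also have "\<dots> = entr p + p * log 2 (card S)"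
    using True c by (simp add: entr_def log_divide algebra_simps)
  finally show ?thesis using assms by simp
qed

lemma entr_le_3_sqrt:
  assumes "0 \<le> p" "p \<le> 1"
  shows "entr p \<le> 3 * sqrt p"
proof (cases "p = 0")
  case False
  then have p: "p > 0" using assms by auto
  define s where "s = sqrt p"
  have s: "s > 0" "p = s^2" using p by (auto simp: s_def)
  have "ln (1 / s) \<le> 1 / s - 1" using s by (intro ln_le_minus_one) auto
  then have "- ln s \<le> 1 / s - 1" using s by (simp add: ln_div)
  then have "2 * s^2 * (- ln s) \<le> 2 * s^2 * (1 / s - 1)" using s by (intro mult_left_mono) auto
  also have "\<dots> \<le> 2 * s" using s by (simp add: power2_eq_square field_simps)
  finally have "- p * ln p \<le> 2 * s" using s by (simp add: ln_mult power2_eq_square)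
  moreover have "2 / 3 \<le> ln (2::real)" by (rule ln2_ge_two_thirds)
  ultimately have "(- p * ln p) / ln 2 \<le> (2 * s) / (2 / 3)"
    using s by (intro frac_le) auto
  then show ?thesis using p by (simp add: entr_def log_def s_def)
qed simp

lemma entr_one_minus_le:
  assumes "0 \<le> p" "p \<le> 1"
  shows "entr (1 - p) \<le> 2 * p"
proof (cases "p = 1")
  case False
  define q where "q = 1 - p"
  have q: "q > 0" "q \<le> 1" using assms False by (auto simp: q_def)
  have "ln (1 / q) \<le> 1 / q - 1" using q by (intro ln_le_minus_one) auto
  then have "q * (- ln q) \<le> q * (1 / q - 1)" using q by (intro mult_left_mono) (auto simp: ln_div)
  then have "- q * ln q \<le> p" using q by (simp add: q_def field_simps)
  moreover have "2 / 3 \<le> ln (2::real)" by (rule ln2_ge_two_thirds)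
  ultimately have "(- q * ln q) / ln 2 \<le> p / (2 / 3)"
    using assms by (intro frac_le) auto
  also have "\<dots> \<le> 2 * p" using assms by simp
  finally show ?thesis using q by (simp add: entr_def log_def q_def)
qed simp

definition finite_rv :: "'a measure \<Rightarrow> ('a \<Rightarrow> 'b) \<Rightarrow> bool" where
  "finite_rv M X \<longleftrightarrow> finite (X ` space M) \<and> (\<forall>v. {x\<in>space M. X x = v} \<in> sets M)"

definition rv_entropy :: "'a measure \<Rightarrow> ('a \<Rightarrow> 'b) \<Rightarrow> real" where
  "rv_entropy M X = (\<Sum>v\<in>X ` space M. entr (measure M {x\<in>space M. X x = v}))"

lemma rv_entropy_eq_sum_superset:
  assumes "finite T" "X ` space M \<subseteq> T"
  shows "rv_entropy M X = (\<Sum>v\<in>T. entr (measure M {x\<in>space M. X x = v}))"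
  unfolding rv_entropy_def
proof (rule sum.mono_neutral_left)
  show "\<forall>v\<in>T - X ` space M. entr (measure M {x\<in>space M. X x = v}) = 0"
  proof
    fix v assume "v \<in> T - X ` space M"
    then have "{x\<in>space M. X x = v} = {}" by force
    then show "entr (measure M {x\<in>space M. X x = v}) = 0" by (metis entr_0 measure_empty)
  qed
qed (use assms in auto)

lemma finite_rv_vimage:
  assumes "finite_rv M X"
  shows "{x\<in>space M. X x \<in> T} \<in> sets M"
proof -
  have "{x\<in>space M. X x \<in> T} = (\<Union>v\<in>X ` space M \<inter> T. {x\<in>space M. X x = v})" by auto
  also have "\<dots> \<in> sets M" using assms by (intro sets.finite_UN) (auto simp: finite_rv_def)
  finally show ?thesis .
qed

lemma factor_through:
  assumes "\<forall>x\<in>space M. \<forall>y\<in>space M. X x = X y \<longrightarrow> Y x = Y y"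
  obtains g where "\<And>x. x \<in> space M \<Longrightarrow> Y x = g (X x)"
proof -
  define g where "g v = Y (SOME y. y \<in> space M \<and> X y = v)" for v
  have "Y x = g (X x)" if x: "x \<in> space M" for x
  proof -
    have "(SOME y. y \<in> space M \<and> X y = X x) \<in> space M \<and> X (SOME y. y \<in> space M \<and> X y = X x) = X x"
      by (rule someI_ex) (use x in auto)
    then show ?thesis unfolding g_def using assms x by metis
  qed
  then show ?thesis by (rule that)
qed

lemma finite_rv_determined:
  assumes X: "finite_rv M X" and det: "\<forall>x\<in>space M. \<forall>y\<in>space M. X x = X y \<longrightarrow> Y x = Y y"
  shows "finite_rv M Y"
proof -
  obtain g where g: "\<And>x. x \<in> space M \<Longrightarrow> Y x = g (X x)" using factor_through[OF det] by blast
  have "Y ` space M = g ` X ` space M" using g by (auto simp: image_iff)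
  then have "finite (Y ` space M)" using X by (simp add: finite_rv_def)
  moreover have "{x\<in>space M. Y x = w} \<in> sets M" for w
  proof -
    have "{x\<in>space M. Y x = w} = {x\<in>space M. X x \<in> {v. g v = w}}" using g by auto
    then show ?thesis using finite_rv_vimage[OF X, of "{v. g v = w}"] by simp
  qed
  ultimately show ?thesis by (simp add: finite_rv_def)
qed

lemma finite_rv_pair:
  assumes X: "finite_rv M X" and Y: "finite_rv M Y"
  shows "finite_rv M (\<lambda>x. (X x, Y x))"
proof -
  have "(\<lambda>x. (X x, Y x)) ` space M \<subseteq> X ` space M \<times> Y ` space M" by auto
  then have "finite ((\<lambda>x. (X x, Y x)) ` space M)"
    by (rule finite_subset) (use X Y in \<open>simp add: finite_rv_def\<close>)
  moreover have "{x\<in>space M. (X x, Y x) = v} = {x\<in>space M. X x = fst v} \<inter> {x\<in>space M. Y x = snd v}" for v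
    by (cases v) auto
  ultimately show ?thesis using X Y by (auto simp: finite_rv_def)
qed

context prob_space
begin

lemma prob_finite_rv_vimage:
  assumes "finite_rv M X"
  shows "prob {x\<in>space M. X x \<in> T} = (\<Sum>v\<in>X ` space M \<inter> T. prob {x\<in>space M. X x = v})"
proof -
  have "{x\<in>space M. X x \<in> T} = (\<Union>v\<in>X ` space M \<inter> T. {x\<in>space M. X x = v})" by auto
  also have "prob \<dots> = (\<Sum>v\<in>X ` space M \<inter> T. prob {x\<in>space M. X x = v})"
    using assms by (intro finite_measure_finite_Union) (auto simp: finite_rv_def disjoint_family_on_def)
  finally show ?thesis .
qed

lemma sum_prob_finite_rv:
  assumes "finite_rv M X"
  shows "(\<Sum>v\<in>X ` space M. prob {x\<in>space M. X x = v}) = 1"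
  using prob_finite_rv_vimage[OF assms, of UNIV] by (simp add: prob_space)

lemma rv_entropy_nonneg: "0 \<le> rv_entropy M X"
  unfolding rv_entropy_def by (intro sum_nonneg entr_nonneg) auto

lemma rv_entropy_determined_le:
  assumes X: "finite_rv M X" and det: "\<forall>x\<in>space M. \<forall>y\<in>space M. X x = X y \<longrightarrow> Y x = Y y"
  shows "rv_entropy M Y \<le> rv_entropy M X"
proof -
  obtain g where g: "\<And>x. x \<in> space M \<Longrightarrow> Y x = g (X x)" using factor_through[OF det] by blast
  have im: "Y ` space M = g ` X ` space M" using g by (auto simp: image_iff)
  have fin: "finite (X ` space M)" using X by (simp add: finite_rv_def)
  let ?p = "\<lambda>v. prob {x\<in>space M. X x = v}"
  have "rv_entropy M Y = (\<Sum>w\<in>Y ` space M. entr (prob {x\<in>space M. X x \<in> {v. g v = w}}))"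
    unfolding rv_entropy_def using g by (intro sum.cong refl arg_cong[where f=entr] arg_cong[where f=prob]) auto
  also have "\<dots> = (\<Sum>w\<in>Y ` space M. entr (\<Sum>v\<in>{v\<in>X ` space M. g v = w}. ?p v))"
  proof (intro sum.cong refl arg_cong[where f=entr])
    fix w
    have "X ` space M \<inter> {v. g v = w} = {v\<in>X ` space M. g v = w}" by auto
    then show "prob {x\<in>space M. X x \<in> {v. g v = w}} = (\<Sum>v\<in>{v\<in>X ` space M. g v = w}. ?p v)"
      using prob_finite_rv_vimage[OF X, of "{v. g v = w}"] by simp
  qed
  also have "\<dots> \<le> (\<Sum>w\<in>Y ` space M. \<Sum>v\<in>{v\<in>X ` space M. g v = w}. entr (?p v))"
    by (intro sum_mono entr_sum_le) (use fin in auto)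
  also have "\<dots> = rv_entropy M X"
    unfolding rv_entropy_def by (rule sum.group) (use fin im in auto)
  finally show ?thesis .
qed

lemma rv_entropy_le_log_card:
  assumes X: "finite_rv M X" and T: "finite T" "X ` space M \<subseteq> T"
  shows "rv_entropy M X \<le> log 2 (card T)"
proof -
  have "rv_entropy M X \<le> entr 1 + 1 * log 2 (card (X ` space M))"
    unfolding rv_entropy_def
    by (rule sum_entr_le_log_card) (use sum_prob_finite_rv[OF X] X in \<open>auto simp: finite_rv_def\<close>)
  also have "\<dots> \<le> log 2 (card T)"
  proof -
    have "card (X ` space M) > 0" using X not_empty by (auto simp: finite_rv_def card_gt_0_iff)
    moreover have "card (X ` space M) \<le> card T" using T by (intro card_mono)
    ultimately show ?thesis by (simp add: entr_def)
  qed
  finally show ?thesis .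
qed

lemma prob_marginal:
  assumes X: "finite_rv M X" and Y: "finite_rv M Y"
  shows "prob {x\<in>space M. X x = a} = (\<Sum>b\<in>Y ` space M. prob {x\<in>space M. X x = a \<and> Y x = b})"
proof -
  have "{x\<in>space M. X x = a} = (\<Union>b\<in>Y ` space M. {x\<in>space M. X x = a \<and> Y x = b})" by auto
  also have "prob \<dots> = (\<Sum>b\<in>Y ` space M. prob {x\<in>space M. X x = a \<and> Y x = b})"
  proof (rule finite_measure_finite_Union)
    show "(\<lambda>b. {x\<in>space M. X x = a \<and> Y x = b}) ` Y ` space M \<subseteq> events"
      using finite_rv_vimage[OF finite_rv_pair[OF X Y], of "{(a, b)}" for b] by auto
  qed (use Y in \<open>auto simp: finite_rv_def disjoint_family_on_def\<close>)
  finally show ?thesis .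
qed

lemma rv_entropy_eq_joint_sum:
  assumes X: "finite_rv M X" and Y: "finite_rv M Y"
  shows "rv_entropy M X = (\<Sum>a\<in>X ` space M. \<Sum>b\<in>Y ` space M.
           - prob {x\<in>space M. X x = a \<and> Y x = b} * log 2 (prob {x\<in>space M. X x = a}))"
  unfolding rv_entropy_def
proof (intro sum.cong refl)
  fix a
  have "- prob {x\<in>space M. X x = a} * c
      = (\<Sum>b\<in>Y ` space M. - prob {x\<in>space M. X x = a \<and> Y x = b} * c)" for c
    using prob_marginal[OF X Y, of a] by (simp add: sum_distrib_right sum_negf)
  then show "entr (prob {x\<in>space M. X x = a}) = (\<Sum>b\<in>Y ` space M.
      - prob {x\<in>space M. X x = a \<and> Y x = b} * log 2 (prob {x\<in>space M. X x = a}))"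
    by (simp add: entr_eq_log)
qed

lemma rv_entropy_pair_le:
  assumes X: "finite_rv M X" and Y: "finite_rv M Y"
  shows "rv_entropy M (\<lambda>x. (X x, Y x)) \<le> rv_entropy M X + rv_entropy M Y"
proof -
  define A where "A = X ` space M"
  define B where "B = Y ` space M"
  define pa where "pa a = prob {x\<in>space M. X x = a}" for a
  define pb where "pb b = prob {x\<in>space M. Y x = b}" for b
  define p where "p = (\<lambda>(a, b). prob {x\<in>space M. X x = a \<and> Y x = b})"
  define q where "q = (\<lambda>(a, b). pa a * pb b)"
  have fin: "finite (A \<times> B)" using X Y by (simp add: A_def B_def finite_rv_def)
  have p_le: "p (a, b) \<le> pa a" "p (a, b) \<le> pb b" for a b
    unfolding p_def pa_def pb_def using X Y
    by (auto intro!: finite_measure_mono simp: finite_rv_def)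
  have sum_p: "(\<Sum>v\<in>A \<times> B. p v) = 1"
    using sum_prob_finite_rv[OF X] prob_marginal[OF X Y]
    by (simp add: sum.cartesian_product' p_def A_def B_def)
  have sum_q: "(\<Sum>v\<in>A \<times> B. q v) = 1"
    using sum_prob_finite_rv[OF X] sum_prob_finite_rv[OF Y]
    by (simp add: sum.cartesian_product' sum_product[symmetric] q_def pa_def pb_def A_def B_def)
  have "rv_entropy M (\<lambda>x. (X x, Y x)) = (\<Sum>v\<in>A \<times> B. entr (p v))"
    by (subst rv_entropy_eq_sum_superset[OF fin]) (auto simp: A_def B_def p_def intro!: sum.cong)
  also have "\<dots> \<le> (\<Sum>v\<in>A \<times> B. if p v > 0 then - p v * log 2 (q v) else 0)
      + ((\<Sum>v\<in>A \<times> B. q v) - (\<Sum>v\<in>A \<times> B. p v)) / ln 2"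
  proof (rule sum_entr_le_cross_entropy[OF fin])
    fix v assume "p v > 0"
    then show "q v > 0" using p_le[of "fst v" "snd v"] by (cases v) (simp add: q_def)
  qed (auto simp: p_def q_def pa_def pb_def)
  also have "(\<Sum>v\<in>A \<times> B. if p v > 0 then - p v * log 2 (q v) else 0)
      = (\<Sum>a\<in>A. \<Sum>b\<in>B. - p (a, b) * log 2 (pa a)) + (\<Sum>a\<in>A. \<Sum>b\<in>B. - p (a, b) * log 2 (pb b))"
  proof -
    have "(if p (a, b) > 0 then - p (a, b) * log 2 (q (a, b)) else 0)
        = - p (a, b) * log 2 (pa a) + - p (a, b) * log 2 (pb b)" for a b
    proof (cases "p (a, b) > 0")
      case True
      then show ?thesis using p_le[of a b] by (simp add: q_def log_mult algebra_simps)
    next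
      case False
      then have "p (a, b) = 0" by (simp add: p_def not_less measure_le_0_iff)
      then show ?thesis by simp
    qed
    then show ?thesis by (simp only: sum.cartesian_product' sum.distrib)
  qed
  also have "(\<Sum>a\<in>A. \<Sum>b\<in>B. - p (a, b) * log 2 (pa a)) = rv_entropy M X"
    using rv_entropy_eq_joint_sum[OF X Y] by (simp add: A_def B_def p_def pa_def)
  also have "(\<Sum>a\<in>A. \<Sum>b\<in>B. - p (a, b) * log 2 (pb b)) = rv_entropy M Y"
  proof -
    have "(\<Sum>a\<in>A. \<Sum>b\<in>B. - p (a, b) * log 2 (pb b)) = (\<Sum>b\<in>B. \<Sum>a\<in>A. - p (a, b) * log 2 (pb b))"
      by (rule sum.swap)
    then show ?thesis
      using rv_entropy_eq_joint_sum[OF Y X] by (simp add: A_def B_def p_def pb_def conj_commute)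
  qed
  finally show ?thesis using sum_p sum_q by simp
qed

end

definition obs_block :: "('a \<Rightarrow> 'a) \<Rightarrow> ('a \<Rightarrow> 'b) \<Rightarrow> nat \<Rightarrow> 'a \<Rightarrow> 'b list" where
  "obs_block f X L x = map (\<lambda>i. X ((f ^^ i) x)) [0..<L]"

definition entropy_rate :: "'a measure \<Rightarrow> ('a \<Rightarrow> 'a) \<Rightarrow> ('a \<Rightarrow> 'b) \<Rightarrow> real" where
  "entropy_rate M f X = lim (\<lambda>L. rv_entropy M (obs_block f X L) / real L)"

lemma length_obs_block [simp]: "length (obs_block f X L x) = L"
  by (simp add: obs_block_def)

lemma nth_obs_block [simp]: "i < L \<Longrightarrow> obs_block f X L x ! i = X ((f ^^ i) x)"
  by (simp add: obs_block_def)

lemma obs_block_eq_iff: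
  "obs_block f X L x = obs_block f X L y \<longleftrightarrow> (\<forall>i<L. X ((f ^^ i) x) = X ((f ^^ i) y))"
  by (simp add: list_eq_iff_nth_eq)

lemma obs_block_Suc: "obs_block f X (Suc L) x = obs_block f X L x @ [X ((f ^^ L) x)]"
  by (simp add: obs_block_def)

lemma obs_block_add: "obs_block f X (m + n) x = obs_block f X m x @ obs_block f X n ((f ^^ m) x)"
proof (rule nth_equalityI)
  fix i assume i: "i < length (obs_block f X (m + n) x)"
  show "obs_block f X (m + n) x ! i = (obs_block f X m x @ obs_block f X n ((f ^^ m) x)) ! i"
  proof (cases "i < m")
    case False
    then have "(f ^^ i) x = (f ^^ (i - m)) ((f ^^ m) x)"
      by (metis funpow_add le_add_diff_inverse2 not_less o_apply)
    then show ?thesis using i False by (simp add: nth_append)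
  qed (use i in \<open>simp add: nth_append\<close>)
qed simp

lemma measure_preserving_map_funpow_space:
  "measure_preserving_map M f \<Longrightarrow> x \<in> space M \<Longrightarrow> (f ^^ n) x \<in> space M"
  by (induction n) (auto simp: measure_preserving_map_def measurable_space)

lemma measurable_funpow: "f \<in> measurable M M \<Longrightarrow> (f ^^ n) \<in> measurable M M"
  by (induction n) (auto simp: measurable_ident_sets)

lemma measure_preserving_map_funpow:
  assumes f: "measure_preserving_map M f"
  shows "measure_preserving_map M (f ^^ n)"
proof (induction n)
  case 0
  have "id -` A \<inter> space M = A" if "A \<in> sets M" for A
    using sets.sets_into_space[OF that] by auto
  then show ?case by (simp add: measure_preserving_map_def measurable_ident_sets id_def)
next
  case (Suc n)
  have f_meas: "f \<in> measurable M M" using f by (simp add: measure_preserving_map_def)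
  show ?case unfolding measure_preserving_map_def
  proof (intro conjI ballI)
    show "f ^^ Suc n \<in> measurable M M" by (rule measurable_funpow[OF f_meas])
    fix A assume A: "A \<in> sets M"
    have B: "(f ^^ n) -` A \<inter> space M \<in> sets M"
      by (rule measurable_sets[OF measurable_funpow[OF f_meas] A])
    have "(f ^^ Suc n) -` A \<inter> space M = f -` ((f ^^ n) -` A \<inter> space M) \<inter> space M"
      using measurable_space[OF f_meas] by (auto simp: funpow_Suc_right simp del: funpow.simps)
    also have "measure M \<dots> = measure M ((f ^^ n) -` A \<inter> space M)"
      using f B unfolding measure_preserving_map_def by blast
    also have "\<dots> = measure M A" using Suc A by (simp add: measure_preserving_map_def)
    finally show "measure M ((f ^^ Suc n) -` A \<inter> space M) = measure M A" .
  qed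
qed

lemma finite_rv_compose:
  assumes g: "measure_preserving_map M g" and X: "finite_rv M X"
  shows "finite_rv M (\<lambda>x. X (g x))"
proof -
  have g_space: "g x \<in> space M" if "x \<in> space M" for x
    using measure_preserving_map_funpow_space[OF g that, of 1] by simp
  have "(\<lambda>x. X (g x)) ` space M \<subseteq> X ` space M" using g_space by auto
  then have "finite ((\<lambda>x. X (g x)) ` space M)"
    using X by (auto simp: finite_rv_def intro: finite_subset)
  moreover have "{x\<in>space M. X (g x) = v} = g -` {y\<in>space M. X y = v} \<inter> space M" for v
    using g_space by auto
  moreover have "g -` {y\<in>space M. X y = v} \<inter> space M \<in> sets M" for v
    using g X by (intro measurable_sets) (auto simp: measure_preserving_map_def finite_rv_def)
  ultimately show ?thesis by (simp add: finite_rv_def)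
qed

lemma finite_rv_obs_block:
  assumes f: "measure_preserving_map M f" and X: "finite_rv M X"
  shows "finite_rv M (obs_block f X L)"
proof (induction L)
  case 0
  have "obs_block f X 0 ` space M \<subseteq> {[]}" by (auto simp: obs_block_def)
  then have "finite (obs_block f X 0 ` space M)" by (rule finite_subset) simp
  moreover have "{x\<in>space M. obs_block f X 0 x = w} = (if w = [] then space M else {})" for w
    by (auto simp: obs_block_def)
  ultimately show ?case by (simp add: finite_rv_def)
next
  case (Suc L)
  have "finite_rv M (\<lambda>x. (obs_block f X L x, X ((f ^^ L) x)))"
    by (rule finite_rv_pair[OF Suc finite_rv_compose[OF measure_preserving_map_funpow[OF f] X]])
  then show ?case by (rule finite_rv_determined) (auto simp: obs_block_Suc)
qed

context prob_space
begin

lemma rv_entropy_compose: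
  assumes g: "measure_preserving_map M g" and X: "finite_rv M X"
  shows "rv_entropy M (\<lambda>x. X (g x)) = rv_entropy M X"
proof -
  have g_space: "g x \<in> space M" if "x \<in> space M" for x
    using measure_preserving_map_funpow_space[OF g that, of 1] by simp
  have fibre: "prob {x\<in>space M. X (g x) = v} = prob {x\<in>space M. X x = v}" for v
  proof -
    have "{x\<in>space M. X (g x) = v} = g -` {y\<in>space M. X y = v} \<inter> space M"
      using g_space by auto
    moreover have "prob (g -` {y\<in>space M. X y = v} \<inter> space M) = prob {y\<in>space M. X y = v}"
      using g X unfolding measure_preserving_map_def finite_rv_def by blast
    ultimately show ?thesis by simp
  qed
  have "(\<lambda>x. X (g x)) ` space M \<subseteq> X ` space M" using g_space by auto
  then have "rv_entropy M (\<lambda>x. X (g x)) = (\<Sum>v\<in>X ` space M. entr (prob {x\<in>space M. X (g x) = v}))"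
    using X by (intro rv_entropy_eq_sum_superset) (auto simp: finite_rv_def)
  then show ?thesis by (simp add: fibre rv_entropy_def)
qed

lemma rv_entropy_obs_block_add:
  assumes f: "measure_preserving_map M f" and X: "finite_rv M X"
  shows "rv_entropy M (obs_block f X (m + n)) \<le> rv_entropy M (obs_block f X m) + rv_entropy M (obs_block f X n)"
proof -
  have Bm: "finite_rv M (obs_block f X m)" by (rule finite_rv_obs_block[OF f X])
  have Bn: "finite_rv M (\<lambda>x. obs_block f X n ((f ^^ m) x))"
    by (rule finite_rv_compose[OF measure_preserving_map_funpow[OF f] finite_rv_obs_block[OF f X]])
  have "rv_entropy M (obs_block f X (m + n))
      \<le> rv_entropy M (\<lambda>x. (obs_block f X m x, obs_block f X n ((f ^^ m) x)))"
    by (rule rv_entropy_determined_le[OF finite_rv_pair[OF Bm Bn]]) (simp add: obs_block_add)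
  also have "\<dots> \<le> rv_entropy M (obs_block f X m) + rv_entropy M (\<lambda>x. obs_block f X n ((f ^^ m) x))"
    by (rule rv_entropy_pair_le[OF Bm Bn])
  also have "rv_entropy M (\<lambda>x. obs_block f X n ((f ^^ m) x)) = rv_entropy M (obs_block f X n)"
    by (rule rv_entropy_compose[OF measure_preserving_map_funpow[OF f] finite_rv_obs_block[OF f X]])
  finally show ?thesis .
qed

lemma rv_entropy_obs_block_le:
  assumes f: "measure_preserving_map M f" and X: "finite_rv M X"
  shows "rv_entropy M (obs_block f X L) \<le> real L * rv_entropy M X"
proof (induction L)
  case 0
  have "rv_entropy M (obs_block f X 0) \<le> log 2 (card {[] :: 'b list})"
    by (rule rv_entropy_le_log_card[OF finite_rv_obs_block[OF f X]]) (auto simp: obs_block_def)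
  then show ?case by simp
next
  case (Suc L)
  have "rv_entropy M (obs_block f X (L + 1)) \<le> rv_entropy M (obs_block f X L) + rv_entropy M (obs_block f X 1)"
    by (rule rv_entropy_obs_block_add[OF f X])
  moreover have "rv_entropy M (obs_block f X 1) \<le> rv_entropy M X"
    by (rule rv_entropy_determined_le[OF X]) (simp add: obs_block_def)
  ultimately show ?case using Suc.IH by (simp add: distrib_right)
qed

lemma obs_block_entropy_tendsto_entropy_rate:
  assumes f: "measure_preserving_map M f" and X: "finite_rv M X"
  shows "(\<lambda>L. rv_entropy M (obs_block f X L) / real L) \<longlonglongrightarrow> entropy_rate M f X"
proof -
  have "convergent (\<lambda>L. rv_entropy M (obs_block f X L) / real L)"
    by (rule subadditive_imp_convergent_div) (rule rv_entropy_obs_block_add[OF f X], rule rv_entropy_nonneg)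
  then show ?thesis by (simp add: entropy_rate_def convergent_LIMSEQ_iff)
qed

lemma entropy_rate_cong_fibres:
  assumes f: "measure_preserving_map M f" and X: "finite_rv M X" and Y: "finite_rv M Y"
    and same_fibres: "\<And>x y. x \<in> space M \<Longrightarrow> y \<in> space M \<Longrightarrow> X x = X y \<longleftrightarrow> Y x = Y y"
  shows "entropy_rate M f X = entropy_rate M f Y"
proof -
  have same: "obs_block f X L x = obs_block f X L y \<longleftrightarrow> obs_block f Y L x = obs_block f Y L y"
    if "x \<in> space M" "y \<in> space M" for L x y
    using same_fibres measure_preserving_map_funpow_space[OF f] that by (simp add: obs_block_eq_iff)
  have "rv_entropy M (obs_block f X L) = rv_entropy M (obs_block f Y L)" for L
    using same by (intro antisym rv_entropy_determined_le finite_rv_obs_block f X Y) auto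
  then show ?thesis by (simp add: entropy_rate_def)
qed

lemma entropy_rate_le_add:
  assumes f: "measure_preserving_map M f" and X: "finite_rv M X" and Y: "finite_rv M Y"
    and le: "\<And>L. rv_entropy M (obs_block f X L) \<le> rv_entropy M (obs_block f Y L) + real L * c"
  shows "entropy_rate M f X \<le> entropy_rate M f Y + c"
proof (rule LIMSEQ_le)
  show "(\<lambda>L. rv_entropy M (obs_block f X L) / real L) \<longlonglongrightarrow> entropy_rate M f X"
    by (rule obs_block_entropy_tendsto_entropy_rate[OF f X])
  show "(\<lambda>L. rv_entropy M (obs_block f Y L) / real L + c) \<longlonglongrightarrow> entropy_rate M f Y + c"
    by (intro tendsto_add tendsto_const obs_block_entropy_tendsto_entropy_rate[OF f Y])
  show "\<exists>N. \<forall>L\<ge>N. rv_entropy M (obs_block f X L) / real L \<le> rv_entropy M (obs_block f Y L) / real L + c"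
  proof (intro exI[of _ 1] allI impI)
    fix L :: nat assume "1 \<le> L"
    then have "rv_entropy M (obs_block f X L) / real L \<le> (rv_entropy M (obs_block f Y L) + real L * c) / real L"
      using le[of L] by (intro divide_right_mono) auto
    also have "\<dots> = rv_entropy M (obs_block f Y L) / real L + c" using \<open>1 \<le> L\<close> by (simp add: field_simps)
    finally show "rv_entropy M (obs_block f X L) / real L \<le> rv_entropy M (obs_block f Y L) / real L + c" .
  qed
qed

end

section \<open>Partitions and the Kolmogorov--Sinai entropy\<close>

definition part_cell :: "'a set set \<Rightarrow> 'a \<Rightarrow> 'a set" where
  "part_cell \<alpha> x = (THE A. A \<in> \<alpha> \<and> x \<in> A)"

definition fibre_partition :: "'a measure \<Rightarrow> ('a \<Rightarrow> 'b) \<Rightarrow> 'a set set" where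
  "fibre_partition M X = (\<lambda>v. {x\<in>space M. X x = v}) ` X ` space M"

lemma part_cell_eq:
  assumes "finite_meas_partition M \<alpha>" "A \<in> \<alpha>" "x \<in> A"
  shows "part_cell \<alpha> x = A"
  unfolding part_cell_def
proof (rule the_equality)
  fix B assume "B \<in> \<alpha> \<and> x \<in> B"
  then show "B = A" using assms unfolding finite_meas_partition_def by blast
qed (use assms in auto)

lemma
  assumes "finite_meas_partition M \<alpha>" "x \<in> space M"
  shows part_cell_mem: "part_cell \<alpha> x \<in> \<alpha>" and mem_part_cell: "x \<in> part_cell \<alpha> x"
proof -
  have "x \<in> \<Union>\<alpha>" using assms by (simp add: finite_meas_partition_def)
  then obtain A where "A \<in> \<alpha>" "x \<in> A" by auto
  then show "part_cell \<alpha> x \<in> \<alpha>" "x \<in> part_cell \<alpha> x" using part_cell_eq[OF assms(1)] by auto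
qed

lemma finite_rv_part_cell:
  assumes \<alpha>: "finite_meas_partition M \<alpha>"
  shows "finite_rv M (part_cell \<alpha>)"
proof -
  have "part_cell \<alpha> ` space M \<subseteq> \<alpha>" using part_cell_mem[OF \<alpha>] by auto
  then have "finite (part_cell \<alpha> ` space M)"
    using \<alpha> by (auto simp: finite_meas_partition_def intro: finite_subset)
  moreover have "{x\<in>space M. part_cell \<alpha> x = A} \<in> sets M" for A
  proof (cases "A \<in> \<alpha>")
    case True
    then have "{x\<in>space M. part_cell \<alpha> x = A} = A"
      using \<alpha> part_cell_eq[OF \<alpha> True] mem_part_cell[OF \<alpha>] by (auto simp: finite_meas_partition_def)
    then show ?thesis using True \<alpha> by (auto simp: finite_meas_partition_def)
  next
    case False
    then have "{x\<in>space M. part_cell \<alpha> x = A} = {}" using part_cell_mem[OF \<alpha>] by auto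
    then show ?thesis by (metis sets.empty_sets)
  qed
  ultimately show ?thesis by (simp add: finite_rv_def)
qed

lemma finite_meas_partition_fibre_partition:
  assumes "finite_rv M X"
  shows "finite_meas_partition M (fibre_partition M X)"
  using assms by (auto simp: finite_meas_partition_def fibre_partition_def finite_rv_def)

lemma part_cell_fibre_partition:
  assumes "finite_rv M X" "x \<in> space M"
  shows "part_cell (fibre_partition M X) x = {y\<in>space M. X y = X x}"
  using assms by (intro part_cell_eq[OF finite_meas_partition_fibre_partition])
    (auto simp: fibre_partition_def)

lemma part_entropy_fibre_partition: "part_entropy M (fibre_partition M X) = rv_entropy M X"
proof -
  have "inj_on (\<lambda>v. {x\<in>space M. X x = v}) (X ` space M)" by (rule inj_onI) blast
  then show ?thesis by (simp add: part_entropy_def fibre_partition_def rv_entropy_def sum.reindex)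
qed

context prob_space
begin

lemma entropy_rate_part_cell_fibre_partition:
  assumes f: "measure_preserving_map M f" and X: "finite_rv M X"
  shows "entropy_rate M f (part_cell (fibre_partition M X)) = entropy_rate M f X"
  using finite_meas_partition_fibre_partition[OF X]
  by (intro entropy_rate_cong_fibres f X finite_rv_part_cell) (auto simp: part_cell_fibre_partition[OF X])

lemma obs_block_part_cell_fibre:
  assumes \<alpha>: "finite_meas_partition M \<alpha>" and f: "measure_preserving_map M f" and y: "y \<in> space M"
  shows "{x\<in>space M. obs_block f (part_cell \<alpha>) L x = obs_block f (part_cell \<alpha>) L y}
    = space M \<inter> (\<Inter>i\<in>{..<L}. (f ^^ i) -` part_cell \<alpha> ((f ^^ i) y))"
proof -
  have "part_cell \<alpha> ((f ^^ i) x) = part_cell \<alpha> ((f ^^ i) y) \<longleftrightarrow> (f ^^ i) x \<in> part_cell \<alpha> ((f ^^ i) y)"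
    if "x \<in> space M" for x i
    using part_cell_eq[OF \<alpha> part_cell_mem[OF \<alpha>]] mem_part_cell[OF \<alpha>]
      measure_preserving_map_funpow_space[OF f] that y by metis
  then show ?thesis by (auto simp: obs_block_eq_iff)
qed

lemma dyn_join_eq_fibre_partition:
  assumes \<alpha>: "finite_meas_partition M \<alpha>" and f: "measure_preserving_map M f"
  shows "dyn_join M f \<alpha> L - {{}} = fibre_partition M (obs_block f (part_cell \<alpha>) L)"
proof
  show "dyn_join M f \<alpha> L - {{}} \<subseteq> fibre_partition M (obs_block f (part_cell \<alpha>) L)"
  proof
    fix F assume "F \<in> dyn_join M f \<alpha> L - {{}}"
    then obtain A x where A: "A \<in> {..<L} \<rightarrow> \<alpha>" and F: "F = space M \<inter> (\<Inter>i\<in>{..<L}. (f ^^ i) -` A i)"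
      and x: "x \<in> F" by (auto simp: dyn_join_def)
    have A_eq: "A i = part_cell \<alpha> ((f ^^ i) x)" if "i < L" for i
      using part_cell_eq[OF \<alpha>] A x F that by auto
    have x_space: "x \<in> space M" using x F by simp
    have "F = space M \<inter> (\<Inter>i\<in>{..<L}. (f ^^ i) -` part_cell \<alpha> ((f ^^ i) x))"
      unfolding F by (rule arg_cong[where f = "\<lambda>S. space M \<inter> S"], rule INF_cong) (simp_all add: A_eq)
    also have "\<dots> = {z\<in>space M. obs_block f (part_cell \<alpha>) L z = obs_block f (part_cell \<alpha>) L x}"
      by (rule obs_block_part_cell_fibre[OF \<alpha> f x_space, symmetric])
    finally show "F \<in> fibre_partition M (obs_block f (part_cell \<alpha>) L)"
      using x_space by (auto simp: fibre_partition_def)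
  qed
  show "fibre_partition M (obs_block f (part_cell \<alpha>) L) \<subseteq> dyn_join M f \<alpha> L - {{}}"
  proof
    fix F assume "F \<in> fibre_partition M (obs_block f (part_cell \<alpha>) L)"
    then obtain y where y: "y \<in> space M" and F: "F = {x\<in>space M. obs_block f (part_cell \<alpha>) L x = obs_block f (part_cell \<alpha>) L y}"
      by (auto simp: fibre_partition_def)
    have cells: "(\<lambda>i. part_cell \<alpha> ((f ^^ i) y)) \<in> {..<L} \<rightarrow> \<alpha>"
      using part_cell_mem[OF \<alpha> measure_preserving_map_funpow_space[OF f y]] by auto
    have "F \<in> dyn_join M f \<alpha> L"
      unfolding F obs_block_part_cell_fibre[OF \<alpha> f y] dyn_join_def
      by (rule CollectI, rule exI[where x = "\<lambda>i. part_cell \<alpha> ((f ^^ i) y)"]) (simp add: cells)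
    moreover have "y \<in> F" using y F by simp
    ultimately show "F \<in> dyn_join M f \<alpha> L - {{}}" by blast
  qed
qed

lemma part_entropy_dyn_join:
  assumes \<alpha>: "finite_meas_partition M \<alpha>" and f: "measure_preserving_map M f"
  shows "part_entropy M (dyn_join M f \<alpha> L) = rv_entropy M (obs_block f (part_cell \<alpha>) L)"
proof -
  let ?\<beta> = "fibre_partition M (obs_block f (part_cell \<alpha>) L)"
  have "finite ?\<beta>"
    using finite_rv_obs_block[OF f finite_rv_part_cell[OF \<alpha>]]
    by (simp add: fibre_partition_def finite_rv_def)
  then have "finite (dyn_join M f \<alpha> L)"
    using dyn_join_eq_fibre_partition[OF \<alpha> f] by (metis finite_Diff2 finite.emptyI finite_insert)
  then have "part_entropy M (dyn_join M f \<alpha> L) = part_entropy M (dyn_join M f \<alpha> L - {{}})"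
    unfolding part_entropy_def by (intro sum.mono_neutral_right) auto
  also have "\<dots> = rv_entropy M (obs_block f (part_cell \<alpha>) L)"
    by (simp add: dyn_join_eq_fibre_partition[OF \<alpha> f] part_entropy_fibre_partition)
  finally show ?thesis .
qed

lemma ks_entropy_eq_SUP_entropy_rate:
  assumes f: "measure_preserving_map M f"
  shows "ks_entropy M f = (SUP \<alpha>\<in>{\<alpha>. finite_meas_partition M \<alpha>}. ereal (entropy_rate M f (part_cell \<alpha>)))"
  unfolding ks_entropy_def entropy_rate_def
  by (intro SUP_cong refl) (simp add: part_entropy_dyn_join[OF _ f])

end

section \<open>Rank words\<close>

lemma card_Collect_le_nat_if:
  "card {i. i \<le> (n::nat) \<and> P i} = (if P n then Suc (card {i. i < n \<and> P i}) else card {i. i < n \<and> P i})"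
proof -
  have "{i. i \<le> n \<and> P i} = (if P n then insert n {i. i < n \<and> P i} else {i. i < n \<and> P i})"
    by (auto simp: le_less)
  then show ?thesis by simp
qed

lemma lower_set_psubset_of_order_flip:
  fixes s t :: "nat \<Rightarrow> 'a::linorder"
  assumes order: "\<And>a b. a < b \<Longrightarrow> b < j \<Longrightarrow> (s a \<le> s b \<longleftrightarrow> t a \<le> t b)"
    and flip: "a < j" "s a \<le> s j" "\<not> t a \<le> t j"
  shows "{i. i < j \<and> t i \<le> t j} \<subset> {i. i < j \<and> s i \<le> s j}"
proof -
  have "s b \<le> s j" if b: "b < j" "t b \<le> t j" for b
  proof (rule ccontr)
    assume sb: "\<not> s b \<le> s j"
    consider "b < a" | "a < b" | "a = b" by linarith
    then show False
      by cases (use order[of b a] order[of a b] flip b sb in auto)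
  qed
  then show ?thesis using flip by blast
qed

lemma ranks_eq_imp_order_eq:
  fixes s t :: "nat \<Rightarrow> 'a::linorder"
  assumes ranks: "\<And>n. n < L \<Longrightarrow> card {i. i \<le> n \<and> s i \<le> s n} = card {i. i \<le> n \<and> t i \<le> t n}"
  shows "i < j \<Longrightarrow> j < L \<Longrightarrow> (s i \<le> s j \<longleftrightarrow> t i \<le> t j)"
proof (induction j arbitrary: i rule: less_induct)
  case (less j)
  have order: "\<And>a b. a < b \<Longrightarrow> b < j \<Longrightarrow> (s a \<le> s b \<longleftrightarrow> t a \<le> t b)"
    using less by auto
  have order': "\<And>a b. a < b \<Longrightarrow> b < j \<Longrightarrow> (t a \<le> t b \<longleftrightarrow> s a \<le> s b)"
    using order by blast
  have counts: "card {i. i < j \<and> s i \<le> s j} = card {i. i < j \<and> t i \<le> t j}"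
    using ranks[OF less(3)] by (simp add: card_Collect_le_nat_if)
  show ?case
  proof (rule ccontr)
    assume "\<not> (s i \<le> s j \<longleftrightarrow> t i \<le> t j)"
    then consider "s i \<le> s j" "\<not> t i \<le> t j" | "t i \<le> t j" "\<not> s i \<le> s j" by blast
    then show False
    proof cases
      case 1
      then have "card {i. i < j \<and> t i \<le> t j} < card {i. i < j \<and> s i \<le> s j}"
        by (intro psubset_card_mono lower_set_psubset_of_order_flip[OF order less(2)]) auto
      then show False using counts by simp
    next
      case 2
      then have "card {i. i < j \<and> s i \<le> s j} < card {i. i < j \<and> t i \<le> t j}"
        by (intro psubset_card_mono lower_set_psubset_of_order_flip[OF order' less(2)]) auto
      then show False using counts by simp
    qed
  qed
qed

lemma lower_set_psubset_of_less:
  fixes s t :: "nat \<Rightarrow> 'a::linorder"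
  assumes order: "\<And>i j. i < j \<Longrightarrow> j < L \<Longrightarrow> (s i \<le> s j \<longleftrightarrow> t i \<le> t j)"
    and n: "n < L" "s n < t n"
  shows "{i. i < L \<and> t i \<le> s n} \<subset> {i. i < L \<and> s i \<le> s n}"
proof -
  have "s b \<le> s n" if b: "b < L" "t b \<le> s n" for b
  proof (rule ccontr)
    assume sb: "\<not> s b \<le> s n"
    consider "b < n" | "n < b" | "b = n" by linarith
    then show False
      by cases (use order[of b n] order[of n b] n b sb in auto)
  qed
  then have "{i. i < L \<and> t i \<le> s n} \<subseteq> {i. i < L \<and> s i \<le> s n}" by blast
  moreover have "n \<in> {i. i < L \<and> s i \<le> s n}" "n \<notin> {i. i < L \<and> t i \<le> s n}" using n by auto
  ultimately show ?thesis by blast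
qed

lemma order_eq_imp_eq_of_counts_eq:
  fixes s t :: "nat \<Rightarrow> 'a::linorder"
  assumes order: "\<And>i j. i < j \<Longrightarrow> j < L \<Longrightarrow> (s i \<le> s j \<longleftrightarrow> t i \<le> t j)"
    and counts: "\<And>v. v \<in> V \<Longrightarrow> card {i. i < L \<and> s i \<le> v} = card {i. i < L \<and> t i \<le> v}"
    and s_V: "\<And>i. i < L \<Longrightarrow> s i \<in> V" and t_V: "\<And>i. i < L \<Longrightarrow> t i \<in> V"
    and n: "n < L"
  shows "s n = t n"
proof (rule ccontr)
  have order': "\<And>i j. i < j \<Longrightarrow> j < L \<Longrightarrow> (t i \<le> t j \<longleftrightarrow> s i \<le> s j)"
    using order by blast
  assume "s n \<noteq> t n"
  then consider "s n < t n" | "t n < s n" by (meson linorder_neqE)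
  then show False
  proof cases
    case 1
    then have "card {i. i < L \<and> t i \<le> s n} < card {i. i < L \<and> s i \<le> s n}"
      by (intro psubset_card_mono lower_set_psubset_of_less[OF order n]) auto
    then show False using counts[OF s_V[OF n]] by simp
  next
    case 2
    then have "card {i. i < L \<and> s i \<le> t n} < card {i. i < L \<and> t i \<le> t n}"
      by (intro psubset_card_mono lower_set_psubset_of_less[OF order' n]) auto
    then show False using counts[OF t_V[OF n]] by simp
  qed
qed

section \<open>Permutation entropy of a finite-valued observable\<close>

lemma tendsto_div_pred_of_log_gap:
  fixes a r :: "nat \<Rightarrow> real"
  assumes a: "(\<lambda>L. a L / real L) \<longlonglongrightarrow> h"
    and lower: "\<And>L. a L \<le> r L + c * log 2 (real L + 1)" and upper: "\<And>L. r L \<le> a L"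
  shows "(\<lambda>L. r L / (real L - 1)) \<longlonglongrightarrow> h"
proof -
  have "(\<lambda>L. a L / real L * (real L / (real L - 1))) \<longlonglongrightarrow> h * 1"
    by (intro tendsto_mult a) real_asymp
  then have "(\<lambda>L. a L / real L * (real L / (real L - 1))) \<longlonglongrightarrow> h"
    by (simp only: mult_1_right)
  moreover have "\<forall>\<^sub>F L in sequentially. a L / real L * (real L / (real L - 1)) = a L / (real L - 1)"
    using eventually_gt_at_top[of 0] by eventually_elim simp
  ultimately have a': "(\<lambda>L. a L / (real L - 1)) \<longlonglongrightarrow> h"
    by (rule Lim_transform_eventually)
  have "(\<lambda>L. a L / (real L - 1) - c * (log 2 (real L + 1) / (real L - 1))) \<longlonglongrightarrow> h - c * 0"
    by (intro tendsto_diff tendsto_mult a' tendsto_const) real_asymp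
  then have a'': "(\<lambda>L. a L / (real L - 1) - c * (log 2 (real L + 1) / (real L - 1))) \<longlonglongrightarrow> h"
    by simp
  show ?thesis
  proof (rule tendsto_sandwich[OF _ _ a'' a'])
    show "\<forall>\<^sub>F L in sequentially. a L / (real L - 1) - c * (log 2 (real L + 1) / (real L - 1)) \<le> r L / (real L - 1)"
      using eventually_gt_at_top[of 1]
    proof eventually_elim
      case (elim L)
      have "(a L - c * log 2 (real L + 1)) / (real L - 1) \<le> r L / (real L - 1)"
        using elim lower[of L] by (intro divide_right_mono) auto
      then show ?case by (simp add: diff_divide_distrib)
    qed
    show "\<forall>\<^sub>F L in sequentially. r L / (real L - 1) \<le> a L / (real L - 1)"
      using eventually_gt_at_top[of 1] by eventually_elim (use upper in \<open>auto intro: divide_right_mono\<close>)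
  qed
qed

context prob_space
begin

lemma rank_word_determined_by_obs_block:
  "obs_block f X L x = obs_block f X L y \<Longrightarrow>
    rank_word (\<lambda>n x. X ((f ^^ n) x)) L x = rank_word (\<lambda>n x. X ((f ^^ n) x)) L y"
  unfolding rank_word_def obs_block_eq_iff by (intro map_cong refl arg_cong[where f = card]) auto

lemma rv_entropy_rank_word_le:
  assumes f: "measure_preserving_map M f" and X: "finite_rv M X"
  shows "rv_entropy M (rank_word (\<lambda>n x. X ((f ^^ n) x)) L) \<le> rv_entropy M (obs_block f X L)"
  by (rule rv_entropy_determined_le[OF finite_rv_obs_block[OF f X]])
    (intro ballI impI rank_word_determined_by_obs_block)

lemma rv_entropy_obs_block_le_rank_word:
  fixes X :: "'a \<Rightarrow> nat"
  assumes f: "measure_preserving_map M f" and X: "finite_rv M X"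
  shows "rv_entropy M (obs_block f X L)
    \<le> rv_entropy M (rank_word (\<lambda>n x. X ((f ^^ n) x)) L) + real (card (X ` space M)) * log 2 (real L + 1)"
proof -
  let ?S = "\<lambda>n x. X ((f ^^ n) x)"
  define vs where "vs = sorted_list_of_set (X ` space M)"
  define C where "C x = map (\<lambda>v. card {i. i < L \<and> ?S i x \<le> v}) vs" for x
  have set_vs: "set vs = X ` space M" and length_vs: "length vs = card (X ` space M)"
    using X by (auto simp: vs_def finite_rv_def)
  have R: "finite_rv M (rank_word ?S L)"
    by (rule finite_rv_determined[OF finite_rv_obs_block[OF f X]])
      (intro ballI impI rank_word_determined_by_obs_block)
  have C: "finite_rv M C"
    by (rule finite_rv_determined[OF finite_rv_obs_block[OF f X]])
      (auto simp: C_def obs_block_eq_iff intro!: map_cong arg_cong[where f = card])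
  have "rv_entropy M (obs_block f X L) \<le> rv_entropy M (\<lambda>x. (rank_word ?S L x, C x))"
  proof (rule rv_entropy_determined_le[OF finite_rv_pair[OF R C]], intro ballI impI)
    fix x y assume x: "x \<in> space M" and y: "y \<in> space M"
      and eq: "(rank_word ?S L x, C x) = (rank_word ?S L y, C y)"
    have "card {i. i \<le> n \<and> ?S i x \<le> ?S n x} = card {i. i \<le> n \<and> ?S i y \<le> ?S n y}" if "n < L" for n
      using eq that nth_map[of n "[0..<L]"] by (auto simp: rank_word_def)
    then have order: "\<And>i j. i < j \<Longrightarrow> j < L \<Longrightarrow> (?S i x \<le> ?S j x \<longleftrightarrow> ?S i y \<le> ?S j y)"
      by (rule ranks_eq_imp_order_eq)
    have counts: "card {i. i < L \<and> ?S i x \<le> v} = card {i. i < L \<and> ?S i y \<le> v}" if "v \<in> X ` space M" for v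
      using eq that by (auto simp: C_def set_vs)
    show "obs_block f X L x = obs_block f X L y"
      unfolding obs_block_eq_iff
      using order_eq_imp_eq_of_counts_eq[OF order counts] measure_preserving_map_funpow_space[OF f] x y
      by blast
  qed
  also have "\<dots> \<le> rv_entropy M (rank_word ?S L) + rv_entropy M C"
    by (rule rv_entropy_pair_le[OF R C])
  also have "rv_entropy M C \<le> log 2 (card {xs. set xs \<subseteq> {..L} \<and> length xs = length vs})"
  proof (rule rv_entropy_le_log_card[OF C])
    show "finite {xs. set xs \<subseteq> {..L} \<and> length xs = length vs}"
      by (rule finite_lists_length_eq) simp
    have "card {i. i < L \<and> P i} \<le> L" for P
      using card_mono[of "{..<L}" "{i. i < L \<and> P i}"] by auto
    then show "C ` space M \<subseteq> {xs. set xs \<subseteq> {..L} \<and> length xs = length vs}"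
      by (auto simp: C_def)
  qed
  also have "\<dots> = real (card (X ` space M)) * log 2 (real L + 1)"
    by (simp add: card_lists_length_eq length_vs log_nat_power add.commute)
  finally show ?thesis by simp
qed

lemma perm_entropy_seq_tendsto_entropy_rate:
  fixes X :: "'a \<Rightarrow> nat"
  assumes f: "measure_preserving_map M f" and X: "finite_rv M X"
  shows "perm_entropy_seq M (\<lambda>n x. X ((f ^^ n) x)) \<longlonglongrightarrow> entropy_rate M f X"
proof -
  let ?r = "\<lambda>L. rv_entropy M (rank_word (\<lambda>n x. X ((f ^^ n) x)) L)"
  have "(\<lambda>L. ?r L / (real L - 1)) \<longlonglongrightarrow> entropy_rate M f X"
    by (rule tendsto_div_pred_of_log_gap[OF obs_block_entropy_tendsto_entropy_rate[OF f X]
          rv_entropy_obs_block_le_rank_word[OF f X] rv_entropy_rank_word_le[OF f X]])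
  moreover have "\<forall>\<^sub>F L in sequentially. ?r L / (real L - 1) = perm_entropy_seq M (\<lambda>n x. X ((f ^^ n) x)) L"
    using eventually_gt_at_top[of 0]
    by eventually_elim (simp add: perm_entropy_seq_def rank_entropy_def rv_entropy_def of_nat_diff)
  ultimately show ?thesis by (rule Lim_transform_eventually)
qed

end

text \<open>The error variable of Fano's inequality: it is \<open>None\<close> where \<open>a \<circ> Y\<close> predicts \<open>X\<close>
  correctly and records the value of \<open>X\<close> otherwise.\<close>
definition mismatch :: "('a \<Rightarrow> 'b) \<Rightarrow> ('c \<Rightarrow> 'b) \<Rightarrow> ('a \<Rightarrow> 'c) \<Rightarrow> 'a \<Rightarrow> 'b option" where
  "mismatch X a Y x = (if X x = a (Y x) then None else Some (X x))"

lemma finite_rv_mismatch: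
  assumes X: "finite_rv M X" and Y: "finite_rv M Y"
  shows "finite_rv M (mismatch X a Y)"
  by (rule finite_rv_determined[OF finite_rv_pair[OF X Y]]) (auto simp: mismatch_def)

context prob_space
begin

lemma entropy_rate_le_add_mismatch:
  assumes f: "measure_preserving_map M f" and X: "finite_rv M X" and Y: "finite_rv M Y"
  shows "entropy_rate M f X \<le> entropy_rate M f Y + rv_entropy M (mismatch X a Y)"
proof (rule entropy_rate_le_add[OF f X Y])
  fix L
  let ?Z = "mismatch X a Y"
  have BY: "finite_rv M (obs_block f Y L)" and BZ: "finite_rv M (obs_block f ?Z L)"
    by (rule finite_rv_obs_block[OF f Y], rule finite_rv_obs_block[OF f finite_rv_mismatch[OF X Y]])
  have "rv_entropy M (obs_block f X L) \<le> rv_entropy M (\<lambda>x. (obs_block f Y L x, obs_block f ?Z L x))"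
  proof (rule rv_entropy_determined_le[OF finite_rv_pair[OF BY BZ]], intro ballI impI)
    fix x y assume "(obs_block f Y L x, obs_block f ?Z L x) = (obs_block f Y L y, obs_block f ?Z L y)"
    then have "Y ((f ^^ i) x) = Y ((f ^^ i) y) \<and> ?Z ((f ^^ i) x) = ?Z ((f ^^ i) y)" if "i < L" for i
      using that by (simp add: obs_block_eq_iff)
    then show "obs_block f X L x = obs_block f X L y"
      unfolding obs_block_eq_iff mismatch_def by (metis option.inject option.simps(3))
  qed
  also have "\<dots> \<le> rv_entropy M (obs_block f Y L) + rv_entropy M (obs_block f ?Z L)"
    by (rule rv_entropy_pair_le[OF BY BZ])
  also have "rv_entropy M (obs_block f ?Z L) \<le> real L * rv_entropy M ?Z"
    by (rule rv_entropy_obs_block_le[OF f finite_rv_mismatch[OF X Y]])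
  finally show "rv_entropy M (obs_block f X L) \<le> rv_entropy M (obs_block f Y L) + real L * rv_entropy M ?Z"
    by simp
qed

lemma rv_entropy_mismatch_le:
  fixes a
  assumes X: "finite_rv M X" and Y: "finite_rv M Y"
  defines "p \<equiv> prob {x\<in>space M. X x \<noteq> a (Y x)}"
  shows "rv_entropy M (mismatch X a Y) \<le> 2 * p + 3 * sqrt p + p * log 2 (card (X ` space M))"
proof -
  let ?Z = "mismatch X a Y"
  let ?q = "\<lambda>v. prob {x\<in>space M. ?Z x = v}"
  have Z: "finite_rv M ?Z" by (rule finite_rv_mismatch[OF X Y])
  have fin: "finite (X ` space M)" using X by (simp add: finite_rv_def)
  have "rv_entropy M ?Z = (\<Sum>v\<in>insert None (Some ` X ` space M). entr (?q v))"
    using fin by (intro rv_entropy_eq_sum_superset) (auto simp: mismatch_def)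
  also have "\<dots> = entr (?q None) + (\<Sum>v\<in>X ` space M. entr (?q (Some v)))"
    using fin by (simp add: sum.reindex)
  also have "(\<Sum>v\<in>X ` space M. entr (?q (Some v))) \<le> entr p + p * log 2 (card (X ` space M))"
  proof (rule sum_entr_le_log_card[OF fin])
    have "{x\<in>space M. X x \<noteq> a (Y x)} = (\<Union>v\<in>X ` space M. {x\<in>space M. ?Z x = Some v})"
      by (auto simp: mismatch_def)
    moreover have "prob (\<Union>v\<in>X ` space M. {x\<in>space M. ?Z x = Some v}) = (\<Sum>v\<in>X ` space M. ?q (Some v))"
      using fin Z by (intro finite_measure_finite_Union) (auto simp: finite_rv_def disjoint_family_on_def)
    ultimately show "(\<Sum>v\<in>X ` space M. ?q (Some v)) = p" by (simp add: p_def)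
  qed simp
  also have "?q None = 1 - p"
  proof -
    have "{x\<in>space M. ?Z x = None} = space M - {x\<in>space M. ?Z x \<in> range Some}"
      by (auto simp: mismatch_def)
    moreover have "{x\<in>space M. ?Z x \<in> range Some} = {x\<in>space M. X x \<noteq> a (Y x)}"
      by (auto simp: mismatch_def)
    ultimately show ?thesis
      using finite_rv_vimage[OF Z, of "range Some"] by (simp add: p_def prob_compl)
  qed
  finally have "rv_entropy M ?Z \<le> entr (1 - p) + entr p + p * log 2 (card (X ` space M))" by simp
  moreover have "0 \<le> p" "p \<le> 1" by (simp_all add: p_def)
  ultimately show ?thesis using entr_le_3_sqrt[of p] entr_one_minus_le[of p] by linarith
qed

end

section \<open>Cells of a product partition\<close>

definition radix_weight :: "('d::linorder \<Rightarrow> nat) \<Rightarrow> 'd set \<Rightarrow> 'd \<Rightarrow> nat" where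
  "radix_weight N T k = (\<Prod>k'\<in>{k'\<in>T. k < k'}. N k')"

lemma radix_sum_insert_min:
  fixes A :: "'d::linorder set"
  assumes "finite A" "\<forall>a\<in>A. b < a"
  shows "(\<Sum>k\<in>insert b A. j k * radix_weight N (insert b A) k)
    = j b * (\<Prod>k\<in>A. N k) + (\<Sum>k\<in>A. j k * radix_weight N A k)"
proof -
  have "{k'\<in>insert b A. b < k'} = A" using assms by auto
  moreover have "{k'\<in>insert b A. k < k'} = {k'\<in>A. k < k'}" if "k \<in> A" for k
    using assms that by auto
  moreover have "b \<notin> A" using assms by auto
  ultimately show ?thesis using assms by (simp add: radix_weight_def)
qed

lemma radix_sum_less:
  fixes T :: "'d::linorder set"
  assumes "finite T" "\<forall>k\<in>T. j k < N k"
  shows "(\<Sum>k\<in>T. j k * radix_weight N T k) < (\<Prod>k\<in>T. N k)"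
  using assms
proof (induction T rule: finite_linorder_min_induct)
  case (insert b A)
  have "j b * (\<Prod>k\<in>A. N k) + (\<Sum>k\<in>A. j k * radix_weight N A k) < (j b + 1) * (\<Prod>k\<in>A. N k)"
    using insert by simp
  also have "\<dots> \<le> N b * (\<Prod>k\<in>A. N k)" using insert.prems by (intro mult_right_mono) auto
  also have "\<dots> = (\<Prod>k\<in>insert b A. N k)"
    using insert by (subst prod.insert) auto
  finally show ?case by (simp only: radix_sum_insert_min[OF insert(1,2)])
qed simp

lemma radix_sum_inj:
  fixes T :: "'d::linorder set"
  assumes "finite T" "\<forall>k\<in>T. j k < N k" "\<forall>k\<in>T. j' k < N k"
    and "(\<Sum>k\<in>T. j k * radix_weight N T k) = (\<Sum>k\<in>T. j' k * radix_weight N T k)"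
  shows "\<forall>k\<in>T. j k = j' k"
  using assms
proof (induction T rule: finite_linorder_min_induct)
  case (insert b A)
  define Q where "Q = (\<Prod>k\<in>A. N k)"
  define s where "s = (\<Sum>k\<in>A. j k * radix_weight N A k)"
  define s' where "s' = (\<Sum>k\<in>A. j' k * radix_weight N A k)"
  have "s < Q" "s' < Q"
    unfolding s_def s'_def Q_def using insert.prems(1,2)
    by (auto intro!: radix_sum_less[OF insert(1)])
  moreover have eq: "j b * Q + s = j' b * Q + s'"
    using insert.prems(3) by (simp only: radix_sum_insert_min[OF insert(1,2)] Q_def s_def s'_def)
  ultimately have jb: "j b = j' b"
    by (metis add.commute div_mult_self3 div_less add_0 less_nat_zero_code)
  with eq have "s = s'" by simp
  then have "\<forall>k\<in>A. j k = j' k"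
    by (intro insert.IH) (use insert.prems in \<open>auto simp: s_def s'_def\<close>)
  with jb show ?case by simp
qed simp

definition cell_coords :: "('d::finite \<Rightarrow> real set list) \<Rightarrow> (real, 'd) vec \<Rightarrow> 'd \<Rightarrow> nat" where
  "cell_coords P x k = cell_idx P k (x $ k)"

lemma cell_idx_eq:
  assumes "prod_partition J P" "j < length (P k)" "t \<in> P k ! j"
  shows "cell_idx P k t = j"
  unfolding cell_idx_def
proof (rule the_equality)
  fix j' assume j': "j' < length (P k) \<and> t \<in> P k ! j'"
  then have "P k ! j' \<inter> P k ! j \<noteq> {}" using assms by auto
  then show "j' = j" using assms j' by (auto simp: prod_partition_def interval_partition_def)
qed (use assms in auto)

lemma
  assumes "prod_partition J P" "t \<in> J k"
  shows cell_idx_less: "cell_idx P k t < length (P k)" and mem_cell_idx: "t \<in> P k ! cell_idx P k t"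
proof -
  have "t \<in> \<Union>(set (P k))" using assms by (auto simp: prod_partition_def interval_partition_def)
  then obtain j where "j < length (P k)" "t \<in> P k ! j" by (auto simp: in_set_conv_nth)
  then show "cell_idx P k t < length (P k)" "t \<in> P k ! cell_idx P k t"
    using cell_idx_eq[OF assms(1)] by auto
qed

lemma cell_number_eq_radix_sum:
  "cell_number P x = 1 + (\<Sum>k\<in>UNIV. cell_coords P x k * radix_weight (\<lambda>k. length (P k)) UNIV k)"
  by (simp add: cell_number_def radix_weight_def cell_coords_def)

lemma cell_number_eq_iff:
  fixes P :: "'d::{finite,linorder} \<Rightarrow> real set list"
  assumes P: "prod_partition J P" and x: "x \<in> box_of J" and y: "y \<in> box_of J"
  shows "cell_number P x = cell_number P y \<longleftrightarrow> cell_coords P x = cell_coords P y"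
proof
  have "\<forall>k\<in>UNIV. cell_coords P z k < length (P k)" if "z \<in> box_of J" for z
    using cell_idx_less[OF P] that by (simp add: cell_coords_def box_of_def)
  moreover assume "cell_number P x = cell_number P y"
  ultimately have "\<forall>k\<in>UNIV. cell_coords P x k = cell_coords P y k"
    using x y by (intro radix_sum_inj) (simp_all add: cell_number_eq_radix_sum)
  then show "cell_coords P x = cell_coords P y" by auto
qed (simp add: cell_number_eq_radix_sum)

lemma diameter_le_part_norm:
  fixes P :: "'d::finite \<Rightarrow> real set list"
  assumes "j < length (P k)"
  shows "diameter (P k ! j) \<le> part_norm P"
proof -
  have "{diameter (P k ! j) | k j. j < length (P k)}
      = (\<lambda>(k, j). diameter (P k ! j)) ` (SIGMA k:UNIV. {..<length (P k)})"
    by auto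
  then have "finite {diameter (P k ! j) | k j. j < length (P k)}" by simp
  then show ?thesis unfolding part_norm_def by (rule Max_ge) (use assms in auto)
qed

lemma dist_le_part_norm:
  fixes J :: "'d::finite \<Rightarrow> real set"
  assumes P: "prod_partition J P" and bounded: "\<And>k. bounded (J k)"
    and x: "x \<in> box_of J" and y: "y \<in> box_of J" and same_cell: "cell_coords P x = cell_coords P y"
  shows "dist x y \<le> real CARD('d) * part_norm P"
proof -
  have "\<bar>(x - y) $ k\<bar> \<le> part_norm P" for k
  proof -
    define j where "j = cell_idx P k (x $ k)"
    have "y $ k \<in> P k ! cell_idx P k (y $ k)" using mem_cell_idx[OF P] y by (simp add: box_of_def)
    moreover have "cell_idx P k (y $ k) = j" using same_cell by (simp add: j_def cell_coords_def fun_eq_iff)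
    moreover have "j < length (P k)" "x $ k \<in> P k ! j"
      using cell_idx_less[OF P] mem_cell_idx[OF P] x by (auto simp: j_def box_of_def)
    ultimately have j: "j < length (P k)" "x $ k \<in> P k ! j" "y $ k \<in> P k ! j" by simp_all
    have "P k ! j \<subseteq> J k"
      using P j(1) nth_mem unfolding prod_partition_def interval_partition_def by blast
    then have "dist (x $ k) (y $ k) \<le> diameter (P k ! j)"
      using bounded_subset[OF bounded] j by (intro diameter_bounded_bound) auto
    also have "\<dots> \<le> part_norm P" by (rule diameter_le_part_norm[of j P k, OF j(1)])
    finally show ?thesis by (simp add: dist_real_def)
  qed
  then have "(\<Sum>k\<in>UNIV. \<bar>(x - y) $ k\<bar>) \<le> real CARD('d) * part_norm P"
    using sum_mono[of UNIV "\<lambda>k. \<bar>(x - y) $ k\<bar>" "\<lambda>_. part_norm P"] by simp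
  then show ?thesis using norm_le_l1_cart[of "x - y"] by (simp add: dist_norm)
qed

lemma borel_vec_nth_interval:
  assumes "is_interval I"
  shows "{x::(real, 'd::finite) vec. x $ k \<in> I} \<in> sets borel"
proof -
  have "(\<lambda>x::(real, 'd) vec. x $ k) \<in> borel_measurable borel"
    by (intro borel_measurable_continuous_onI continuous_intros)
  from measurable_sets[OF this real_interval_borel_measurable[OF assms]] show ?thesis
    by (simp add: vimage_def)
qed

lemma box_of_borel:
  fixes J :: "'d::finite \<Rightarrow> real set"
  assumes "\<And>k. is_interval (J k)"
  shows "box_of J \<in> sets borel"
proof -
  have "box_of J = (\<Inter>k. {x::(real, 'd) vec. x $ k \<in> J k})" by (auto simp: box_of_def)
  also have "\<dots> \<in> sets borel" by (intro sets.finite_INT borel_vec_nth_interval assms) auto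
  finally show ?thesis .
qed

lemma space_eq_box_of:
  assumes "sets M = sets (restrict_space borel (box_of J))"
  shows "space M = box_of J"
  using sets_eq_imp_space_eq[OF assms] by (simp add: space_restrict_space)

lemma finite_rv_cell_coords:
  fixes J :: "'d::finite \<Rightarrow> real set" and M :: "(real, 'd) vec measure"
  assumes M_sets: "sets M = sets (restrict_space borel (box_of J))" and P: "prod_partition J P"
  shows "finite_rv M (cell_coords P)"
proof -
  have space: "space M = box_of J" by (rule space_eq_box_of[OF M_sets])
  have coords_less: "cell_coords P x k < length (P k)" if "x \<in> space M" for x k
    using cell_idx_less[OF P] that by (simp add: space box_of_def cell_coords_def)
  have "cell_coords P ` space M \<subseteq> Pi\<^sub>E UNIV (\<lambda>k. {..<length (P k)})"
    using coords_less by auto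
  then have "finite (cell_coords P ` space M)" by (rule finite_subset) (intro finite_PiE, auto)
  moreover have "{x\<in>space M. cell_coords P x = j} \<in> sets M" for j
  proof (cases "\<forall>k. j k < length (P k)")
    case True
    have "cell_coords P x = j \<longleftrightarrow> (\<forall>k. x $ k \<in> P k ! j k)" if x: "x \<in> box_of J" for x
    proof
      have "x $ k \<in> P k ! cell_coords P x k" for k
        using mem_cell_idx[OF P] x by (simp add: cell_coords_def box_of_def)
      then show "cell_coords P x = j \<Longrightarrow> \<forall>k. x $ k \<in> P k ! j k" by blast
      show "\<forall>k. x $ k \<in> P k ! j k \<Longrightarrow> cell_coords P x = j"
        using cell_idx_eq[OF P True[rule_format]] by (auto simp: cell_coords_def)
    qed
    then have "{x\<in>space M. cell_coords P x = j} = box_of J \<inter> (\<Inter>k. {x. x $ k \<in> P k ! j k})"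
      by (auto simp: space)
    also have "\<dots> \<in> sets M"
    proof -
      have "is_interval (P k ! j k)" for k
        using P True by (auto simp: prod_partition_def interval_partition_def)
      then have "(\<Inter>k. {x::(real, 'd) vec. x $ k \<in> P k ! j k}) \<in> sets borel"
        by (intro sets.finite_INT borel_vec_nth_interval) auto
      then show ?thesis using M_sets by (auto simp: sets_restrict_space)
    qed
    finally show ?thesis .
  next
    case False
    then have "{x\<in>space M. cell_coords P x = j} = {}" using coords_less by fastforce
    then show ?thesis by (metis sets.empty_sets)
  qed
  ultimately show ?thesis by (simp add: finite_rv_def)
qed

lemma finite_rv_cell_number:
  fixes J :: "'d::{finite,linorder} \<Rightarrow> real set" and M :: "(real, 'd) vec measure"
  assumes M_sets: "sets M = sets (restrict_space borel (box_of J))" and P: "prod_partition J P"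
  shows "finite_rv M (cell_number P)"
  by (rule finite_rv_determined[OF finite_rv_cell_coords[OF M_sets P]]) (simp add: cell_number_eq_radix_sum)

section \<open>Fine product partitions approximate every finite partition\<close>

lemma inner_approx_compact:
  fixes J :: "'d::finite \<Rightarrow> real set" and M :: "(real, 'd) vec measure"
  assumes M_prob: "prob_space M" and M_sets: "sets M = sets (restrict_space borel (box_of J))"
    and J_int: "\<And>k. is_interval (J k)" and A: "A \<in> sets M" and e: "e > 0"
  obtains K where "compact K" "K \<subseteq> A" "K \<in> sets M" "measure M A - measure M K < e"
proof -
  interpret prob_space M by (rule M_prob)
  have space: "space M = box_of J" by (rule space_eq_box_of[OF M_sets])
  have box: "box_of J \<in> sets borel" by (rule box_of_borel[OF J_int])
  have A_borel: "A \<in> sets borel" and A_box: "A \<subseteq> box_of J"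
    using A M_sets box sets.sets_into_space[OF A] space by (auto simp: sets_restrict_space)
  have compact_sets: "K \<in> sets M" if "compact K" "K \<subseteq> A" for K
  proof -
    have "box_of J \<inter> K \<in> sets M"
      using M_sets that by (auto simp: sets_restrict_space compact_imp_closed borel_closed)
    moreover have "box_of J \<inter> K = K" using that A_box by auto
    ultimately show ?thesis by simp
  qed
  text \<open>Inner regularity holds for finite Borel measures on the whole space, so push \<open>M\<close>
    forward to \<open>borel\<close> along the inclusion.\<close>
  define N where "N = distr M borel (\<lambda>x. x)"
  have id_meas: "(\<lambda>x. x) \<in> measurable M borel"
    using measurable_cong_sets[OF M_sets refl] measurable_restrict_space1[OF measurable_ident_sets[OF refl]]
    by blast
  have N_eq: "emeasure N B = emeasure M B" if "B \<in> sets borel" "B \<subseteq> box_of J" for B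
    using emeasure_distr[OF id_meas that(1)] that space by (simp add: N_def Int_absorb2)
  have N_finite: "emeasure N (space N) \<noteq> \<infinity>"
    using emeasure_distr[OF id_meas, of UNIV] by (simp add: N_def)
  have reg: "emeasure N A = (SUP K \<in> {K. K \<subseteq> A \<and> compact K}. emeasure N K)"
    by (rule inner_regular[OF _ N_finite A_borel]) (simp add: N_def)
  show ?thesis
  proof (cases "prob A < e")
    case True
    then show ?thesis by (intro that[of "{}"]) auto
  next
    case False
    then have "ennreal (prob A - e) < emeasure N A"
      using e N_eq[OF A_borel A_box] by (simp add: emeasure_eq_measure ennreal_lessI)
    then obtain K where K: "K \<subseteq> A" "compact K" "ennreal (prob A - e) < emeasure N K"
      by (auto simp: reg less_SUP_iff)
    have "emeasure N K = ennreal (prob K)"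
      using N_eq[of K] K A_box by (simp add: compact_imp_closed borel_closed emeasure_eq_measure)
    then have "prob A - prob K < e" using K(3) False e by (simp add: ennreal_less_iff)
    then show ?thesis using K compact_sets[OF K(2,1)] by (intro that) auto
  qed
qed

lemma separated_compact_cores:
  fixes J :: "'d::finite \<Rightarrow> real set" and M :: "(real, 'd) vec measure"
  assumes M_prob: "prob_space M" and M_sets: "sets M = sets (restrict_space borel (box_of J))"
    and J_int: "\<And>k. is_interval (J k)" and \<alpha>: "finite_meas_partition M \<alpha>" and e: "e > 0"
  obtains K \<eta> where "\<eta> > 0" "\<And>A. A \<in> \<alpha> \<Longrightarrow> K A \<subseteq> A \<and> K A \<in> sets M"
    "(\<Sum>A\<in>\<alpha>. measure M (A - K A)) < e"
    "\<And>A B x y. A \<in> \<alpha> \<Longrightarrow> B \<in> \<alpha> \<Longrightarrow> A \<noteq> B \<Longrightarrow> x \<in> K A \<Longrightarrow> y \<in> K B \<Longrightarrow> \<eta> \<le> dist x y"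
proof -
  interpret prob_space M by (rule M_prob)
  have fin: "finite \<alpha>" and sets: "\<alpha> \<subseteq> sets M"
    and disj: "\<And>A B. A \<in> \<alpha> \<Longrightarrow> B \<in> \<alpha> \<Longrightarrow> A \<noteq> B \<Longrightarrow> A \<inter> B = {}"
    using \<alpha> by (auto simp: finite_meas_partition_def)
  have "\<alpha> \<noteq> {}" using \<alpha> not_empty by (auto simp: finite_meas_partition_def)
  then have card: "card \<alpha> > 0" using fin by (simp add: card_gt_0_iff)
  have "\<exists>K. compact K \<and> K \<subseteq> A \<and> K \<in> sets M \<and> prob A - prob K < e / card \<alpha>" if "A \<in> \<alpha>" for A
  proof (rule inner_approx_compact[OF M_prob M_sets J_int])
    show "A \<in> sets M" using that sets by auto
    show "e / card \<alpha> > 0" using e card by simp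
  qed blast
  then obtain K where K: "\<And>A. A \<in> \<alpha> \<Longrightarrow> compact (K A) \<and> K A \<subseteq> A \<and> K A \<in> sets M \<and> prob A - prob (K A) < e / card \<alpha>"
    by metis
  define U where "U A = \<Union>(K ` (\<alpha> - {A}))" for A
  have "\<exists>d>0. \<forall>x\<in>K A. \<forall>y\<in>U A. d \<le> dist x y" if A: "A \<in> \<alpha>" for A
  proof (rule separate_compact_closed)
    show "compact (K A)" using K[OF A] by blast
    show "closed (U A)" unfolding U_def using fin K by (intro compact_imp_closed compact_UN) auto
    show "K A \<inter> U A = {}" unfolding U_def using K disj A by blast
  qed
  then obtain d where d: "\<And>A. A \<in> \<alpha> \<Longrightarrow> d A > 0 \<and> (\<forall>x\<in>K A. \<forall>y\<in>U A. d A \<le> dist x y)"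
    by metis
  show ?thesis
  proof
    show "Min (d ` \<alpha>) > 0" using fin \<open>\<alpha> \<noteq> {}\<close> d by (subst Min_gr_iff) auto
    show "K A \<subseteq> A \<and> K A \<in> sets M" if "A \<in> \<alpha>" for A using K[OF that] by blast
    have "(\<Sum>A\<in>\<alpha>. measure M (A - K A)) = (\<Sum>A\<in>\<alpha>. prob A - prob (K A))"
      using sets K by (intro sum.cong refl finite_measure_Diff) auto
    also have "\<dots> < (\<Sum>A\<in>\<alpha>. e / card \<alpha>)" using fin \<open>\<alpha> \<noteq> {}\<close> K by (intro sum_strict_mono) auto
    finally show "(\<Sum>A\<in>\<alpha>. measure M (A - K A)) < e" using card by simp
    fix A B x y assume "A \<in> \<alpha>" "B \<in> \<alpha>" "A \<noteq> B" "x \<in> K A" "y \<in> K B"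
    then have "d A \<le> dist x y" using d unfolding U_def by blast
    moreover have "Min (d ` \<alpha>) \<le> d A" using fin \<open>A \<in> \<alpha>\<close> by simp
    ultimately show "Min (d ` \<alpha>) \<le> dist x y" by linarith
  qed
qed

text \<open>Once the cells are smaller than the gap between the cores, every cell meets at most
  one core, so the cell number predicts the cell of \<open>\<alpha>\<close> outside the cores.\<close>
lemma part_cell_predicted_by_cell_number:
  fixes J :: "'d::{finite,linorder} \<Rightarrow> real set" and M :: "(real, 'd) vec measure"
  assumes space: "space M = box_of J" and J_bdd: "\<And>k. bounded (J k)"
    and \<alpha>: "finite_meas_partition M \<alpha>" and core: "\<And>A. A \<in> \<alpha> \<Longrightarrow> K A \<subseteq> A"
    and gap: "\<And>A B x y. A \<in> \<alpha> \<Longrightarrow> B \<in> \<alpha> \<Longrightarrow> A \<noteq> B \<Longrightarrow> x \<in> K A \<Longrightarrow> y \<in> K B \<Longrightarrow> \<eta> \<le> dist x y"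
    and P: "prod_partition J P" and fine: "real CARD('d) * part_norm P < \<eta>"
  obtains a where "{x\<in>space M. part_cell \<alpha> x \<noteq> a (cell_number P x)} \<subseteq> (\<Union>A\<in>\<alpha>. A - K A)"
proof
  define a where "a c = (SOME A. A \<in> \<alpha> \<and> (\<exists>y\<in>K A. cell_number P y = c))" for c
  have a: "a (cell_number P x) = A" if A: "A \<in> \<alpha>" and x: "x \<in> K A" for A x
  proof -
    have "\<exists>A'. A' \<in> \<alpha> \<and> (\<exists>y\<in>K A'. cell_number P y = cell_number P x)" using A x by blast
    then have "a (cell_number P x) \<in> \<alpha> \<and> (\<exists>y\<in>K (a (cell_number P x)). cell_number P y = cell_number P x)"
      unfolding a_def by (rule someI_ex)
    then obtain y where A': "a (cell_number P x) \<in> \<alpha>" and y: "y \<in> K (a (cell_number P x))"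
      and same: "cell_number P y = cell_number P x" by blast
    have box: "z \<in> box_of J" if "B \<in> \<alpha>" "z \<in> K B" for B z
      using that core[OF that(1)] \<alpha> space unfolding finite_meas_partition_def by blast
    have "dist x y \<le> real CARD('d) * part_norm P"
      using box A x A' y same cell_number_eq_iff[OF P] by (intro dist_le_part_norm[OF P J_bdd]) auto
    then have "dist x y < \<eta>" using fine by linarith
    then show ?thesis using gap[OF A' A _ y x] by (metis dist_commute not_le)
  qed
  show "{x\<in>space M. part_cell \<alpha> x \<noteq> a (cell_number P x)} \<subseteq> (\<Union>A\<in>\<alpha>. A - K A)"
  proof
    fix x assume x: "x \<in> {x\<in>space M. part_cell \<alpha> x \<noteq> a (cell_number P x)}"
    then have A: "part_cell \<alpha> x \<in> \<alpha>" "x \<in> part_cell \<alpha> x"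
      using part_cell_mem[OF \<alpha>] mem_part_cell[OF \<alpha>] by auto
    have "x \<notin> K (part_cell \<alpha> x)" using a[OF A(1)] x by auto
    then show "x \<in> (\<Union>A\<in>\<alpha>. A - K A)" using A by blast
  qed
qed

lemma cell_number_approximates_partition:
  fixes J :: "'d::{finite,linorder} \<Rightarrow> real set" and M :: "(real, 'd) vec measure"
  assumes M_prob: "prob_space M" and M_sets: "sets M = sets (restrict_space borel (box_of J))"
    and J_int: "\<And>k. is_interval (J k)" and J_bdd: "\<And>k. bounded (J k)"
    and \<alpha>: "finite_meas_partition M \<alpha>" and e: "e > 0"
  obtains \<delta> where "\<delta> > 0" "\<And>P. prod_partition J P \<Longrightarrow> part_norm P < \<delta> \<Longrightarrow>
      \<exists>a. measure M {x\<in>space M. part_cell \<alpha> x \<noteq> a (cell_number P x)} < e"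
proof -
  interpret prob_space M by (rule M_prob)
  obtain K \<eta> where \<eta>: "\<eta> > 0" and K: "\<And>A. A \<in> \<alpha> \<Longrightarrow> K A \<subseteq> A \<and> K A \<in> sets M"
    and small: "(\<Sum>A\<in>\<alpha>. measure M (A - K A)) < e"
    and gap: "\<And>A B x y. A \<in> \<alpha> \<Longrightarrow> B \<in> \<alpha> \<Longrightarrow> A \<noteq> B \<Longrightarrow> x \<in> K A \<Longrightarrow> y \<in> K B \<Longrightarrow> \<eta> \<le> dist x y"
    by (rule separated_compact_cores[OF M_prob M_sets J_int \<alpha> e]) blast
  have fin: "finite \<alpha>" and sets: "\<alpha> \<subseteq> sets M" using \<alpha> by (auto simp: finite_meas_partition_def)
  show ?thesis
  proof
    show "\<eta> / real CARD('d) > 0" using \<eta> by simp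
    fix P assume P: "prod_partition J P" and "part_norm P < \<eta> / real CARD('d)"
    then have fine: "real CARD('d) * part_norm P < \<eta>" by (simp add: field_simps)
    have core: "K A \<subseteq> A" if "A \<in> \<alpha>" for A using K[OF that] by blast
    obtain a where a: "{x\<in>space M. part_cell \<alpha> x \<noteq> a (cell_number P x)} \<subseteq> (\<Union>A\<in>\<alpha>. A - K A)"
      by (rule part_cell_predicted_by_cell_number[OF space_eq_box_of[OF M_sets] J_bdd \<alpha> core gap P fine])
    have cores_sets: "(\<lambda>A. A - K A) ` \<alpha> \<subseteq> sets M" using sets K by auto
    have "measure M {x\<in>space M. part_cell \<alpha> x \<noteq> a (cell_number P x)} \<le> measure M (\<Union>A\<in>\<alpha>. A - K A)"
      using fin cores_sets by (intro finite_measure_mono[OF a]) auto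
    also have "\<dots> \<le> (\<Sum>A\<in>\<alpha>. measure M (A - K A))"
      by (rule finite_measure_subadditive_finite[OF fin cores_sets])
    finally show "\<exists>a. measure M {x\<in>space M. part_cell \<alpha> x \<noteq> a (cell_number P x)} < e"
      using small by (intro exI[of _ a]) linarith
  qed
qed

lemma eventually_fine_partitions:
  assumes "\<delta> > 0" "\<And>P. prod_partition J P \<Longrightarrow> part_norm P < \<delta> \<Longrightarrow> Q P"
  shows "eventually Q (fine_partitions J)"
  unfolding fine_partitions_def
  by (rule eventually_INF1[of \<delta>]) (use assms in \<open>auto simp: eventually_principal\<close>)

lemma small_mismatch_bound:
  fixes c \<eta> :: real
  assumes "\<eta> > 0"
  obtains e where "e > 0" "\<And>p. 0 \<le> p \<Longrightarrow> p < e \<Longrightarrow> 2 * p + 3 * sqrt p + p * c < \<eta>"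
proof -
  have "continuous (at 0) (\<lambda>p. 2 * p + 3 * sqrt p + p * c)" by (intro continuous_intros)
  then obtain e where e: "e > 0" "\<And>p. dist p 0 < e \<Longrightarrow> dist (2 * p + 3 * sqrt p + p * c) 0 < \<eta>"
    using assms unfolding continuous_at_eps_delta by auto
  show ?thesis
  proof (rule that[OF e(1)])
    fix p :: real assume "0 \<le> p" "p < e"
    then have "\<bar>2 * p + 3 * sqrt p + p * c\<bar> < \<eta>" using e(2)[of p] by (simp add: dist_real_def)
    then show "2 * p + 3 * sqrt p + p * c < \<eta>" by linarith
  qed
qed

lemma tendsto_SUP_of_eventually_bounds:
  fixes g :: "'a \<Rightarrow> real" and h :: "'b \<Rightarrow> real"
  assumes upper: "eventually (\<lambda>P. ereal (g P) \<le> (SUP i\<in>I. ereal (h i))) F"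
    and lower: "\<And>i \<eta>. i \<in> I \<Longrightarrow> \<eta> > 0 \<Longrightarrow> eventually (\<lambda>P. h i \<le> g P + \<eta>) F"
  shows "((\<lambda>P. ereal (g P)) \<longlongrightarrow> (SUP i\<in>I. ereal (h i))) F"
proof (rule order_tendstoI)
  fix y assume "y < (SUP i\<in>I. ereal (h i))"
  then obtain i where i: "i \<in> I" and "y < ereal (h i)" by (auto simp: less_SUP_iff)
  then obtain r where r: "y < ereal r" "r < h i" using ereal_dense2 by fastforce
  have "eventually (\<lambda>P. h i \<le> g P + (h i - r) / 2) F" using r by (intro lower i) simp
  then show "eventually (\<lambda>P. y < ereal (g P)) F"
  proof (rule eventually_mono)
    fix P assume "h i \<le> g P + (h i - r) / 2"
    then have "r < g P" using r(2) by (simp add: field_simps)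
    then have "ereal r < ereal (g P)" by simp
    then show "y < ereal (g P)" using r(1) by (rule less_trans[rotated])
  qed
next
  fix y assume "(SUP i\<in>I. ereal (h i)) < y"
  with upper show "eventually (\<lambda>P. ereal (g P) < y) F"
    by (auto elim: eventually_mono)
qed

context
  fixes J :: "'d::{finite,linorder} \<Rightarrow> real set"
    and M :: "((real, 'd) vec) measure"
    and f :: "(real, 'd) vec \<Rightarrow> (real, 'd) vec"
  assumes J_int: "\<And>k. is_interval (J k)"
    and J_bdd: "\<And>k. bounded (J k)"
    and M_sets: "sets M = sets (restrict_space borel (box_of J))"
    and M_prob: "prob_space M"
    and f: "measure_preserving_map M f"
begin

interpretation prob_space M by (rule M_prob)

lemma entropy_rate_cell_number_le_ks_entropy:
  assumes P: "prod_partition J P"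
  shows "ereal (entropy_rate M f (cell_number P)) \<le> ks_entropy M f"
proof -
  let ?\<alpha> = "fibre_partition M (cell_number P)"
  have X: "finite_rv M (cell_number P)" by (rule finite_rv_cell_number[OF M_sets P])
  have "ereal (entropy_rate M f (part_cell ?\<alpha>)) \<le> ks_entropy M f"
    unfolding ks_entropy_eq_SUP_entropy_rate[OF f]
    using finite_meas_partition_fibre_partition[OF X] by (intro SUP_upper) simp
  then show ?thesis by (simp add: entropy_rate_part_cell_fibre_partition[OF f X])
qed

lemma eventually_entropy_rate_part_cell_le_cell_number:
  assumes \<alpha>: "finite_meas_partition M \<alpha>" and \<eta>: "\<eta> > 0"
  shows "\<forall>\<^sub>F P in fine_partitions J. entropy_rate M f (part_cell \<alpha>) \<le> entropy_rate M f (cell_number P) + \<eta>"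
proof -
  obtain e where e: "e > 0"
    and bound: "\<And>p. 0 \<le> p \<Longrightarrow> p < e \<Longrightarrow> 2 * p + 3 * sqrt p + p * log 2 (card (part_cell \<alpha> ` space M)) < \<eta>"
    by (rule small_mismatch_bound[OF \<eta>, where c = "log 2 (card (part_cell \<alpha> ` space M))"]) blast
  obtain \<delta> where "\<delta> > 0" and approx: "\<And>P. prod_partition J P \<Longrightarrow> part_norm P < \<delta> \<Longrightarrow>
      \<exists>a. prob {x\<in>space M. part_cell \<alpha> x \<noteq> a (cell_number P x)} < e"
    by (rule cell_number_approximates_partition[OF M_prob M_sets J_int J_bdd \<alpha> e]) blast
  show ?thesis
  proof (rule eventually_fine_partitions[OF \<open>\<delta> > 0\<close>])
    fix P assume P: "prod_partition J P" and "part_norm P < \<delta>"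
    then obtain a where a: "prob {x\<in>space M. part_cell \<alpha> x \<noteq> a (cell_number P x)} < e"
      using approx by blast
    have X: "finite_rv M (part_cell \<alpha>)" and Y: "finite_rv M (cell_number P)"
      by (rule finite_rv_part_cell[OF \<alpha>], rule finite_rv_cell_number[OF M_sets P])
    have "entropy_rate M f (part_cell \<alpha>)
        \<le> entropy_rate M f (cell_number P) + rv_entropy M (mismatch (part_cell \<alpha>) a (cell_number P))"
      by (rule entropy_rate_le_add_mismatch[OF f X Y])
    also have "rv_entropy M (mismatch (part_cell \<alpha>) a (cell_number P)) < \<eta>"
      using rv_entropy_mismatch_le[OF X Y, of a] bound[OF _ a] by simp
    finally show "entropy_rate M f (part_cell \<alpha>) \<le> entropy_rate M f (cell_number P) + \<eta>"
      by simp
  qed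
qed

lemma entropy_rate_cell_number_tendsto_ks_entropy:
  "((\<lambda>P. ereal (entropy_rate M f (cell_number P))) \<longlongrightarrow> ks_entropy M f) (fine_partitions J)"
proof -
  have "\<forall>\<^sub>F P in fine_partitions J. prod_partition J P"
    by (rule eventually_fine_partitions[of 1]) auto
  then have "\<forall>\<^sub>F P in fine_partitions J. ereal (entropy_rate M f (cell_number P)) \<le> ks_entropy M f"
    by eventually_elim (rule entropy_rate_cell_number_le_ks_entropy)
  then show ?thesis
    unfolding ks_entropy_eq_SUP_entropy_rate[OF f]
    by (intro tendsto_SUP_of_eventually_bounds eventually_entropy_rate_part_cell_le_cell_number) auto
qed

end

theorem theorem3:
  fixes J :: "'d::{finite,linorder} \<Rightarrow> real set"
    and M :: "((real, 'd) vec) measure"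
    and f :: "(real, 'd) vec \<Rightarrow> (real, 'd) vec"
  assumes J_int: "\<And>k. is_interval (J k)"
    and J_bdd: "\<And>k. bounded (J k)"
    and J_ne: "\<And>k. J k \<noteq> {}"
    and M_sets: "sets M = sets (restrict_space borel (box_of J))"
    and M_prob: "prob_space M"
    and erg: "ergodic M f"
  shows "(\<forall>\<^sub>F P in fine_partitions J.
            convergent (perm_entropy_seq M (simple_obs P f)))
       \<and> ((\<lambda>P. ereal (perm_entropy_rate_proc M (simple_obs P f)))
            \<longlongrightarrow> ks_entropy M f) (fine_partitions J)"
proof -
  interpret prob_space M by (rule M_prob)
  have f: "measure_preserving_map M f" using erg by (simp add: ergodic_def)
  have conv: "perm_entropy_seq M (simple_obs P f) \<longlonglongrightarrow> entropy_rate M f (cell_number P)"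
    if "prod_partition J P" for P
    using perm_entropy_seq_tendsto_entropy_rate[OF f finite_rv_cell_number[OF M_sets that]]
    by (simp add: simple_obs_def[abs_def])
  have fine: "\<forall>\<^sub>F P in fine_partitions J. prod_partition J P"
    by (rule eventually_fine_partitions[of 1]) auto
  show ?thesis
  proof
    show "\<forall>\<^sub>F P in fine_partitions J. convergent (perm_entropy_seq M (simple_obs P f))"
      using fine by eventually_elim (use conv in \<open>auto simp: convergent_def\<close>)
    have "\<forall>\<^sub>F P in fine_partitions J.
        ereal (entropy_rate M f (cell_number P)) = ereal (perm_entropy_rate_proc M (simple_obs P f))"
      using fine by eventually_elim (simp add: perm_entropy_rate_proc_def limI[OF conv])
    with entropy_rate_cell_number_tendsto_ks_entropy[OF J_int J_bdd M_sets M_prob f]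
    show "((\<lambda>P. ereal (perm_entropy_rate_proc M (simple_obs P f))) \<longlongrightarrow> ks_entropy M f) (fine_partitions J)"
      by (rule Lim_transform_eventually)
  qed
qed

end
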